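(* (1) Every connected graph with maximum degree at most $3$ is a $2$-OR-PCG. (2) Every regular graph of even degree $\Delta$ is a $\frac{\Delta}{2}$-OR-PCG. (3) Every bipartite regular graph of odd degree $\Delta$ is a $\lceil\frac{\Delta}{2}\rceil$-OR-PCG.
   Context: All trees are unrooted with edges weighted by nonnegative reals; $d_T(u,v)$ is the weight of the path between leaves $u,v$ of $T$. A graph $H$ is a PCG if there exist a tree $T$ with leaf set $V(H)$ and an interval $I$ of nonnegative reals such that $\{u,v\}\in E(H)$ iff $d_T(u,v)\in I$. A graph $G=(V,E)$ is a $k$-OR-PCG if there exist $k$ PCGs $G_1,\ldots,G_k$, each with vertex set $V$, such that $E=\bigcup_{i=1}^k E(G_i)$. *)

theory Defs
  imports Complex_Main
begin

definition graph_edges_ok :: "'a set \<Rightarrow> 'a set set \<Rightarrow> bool" where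
  "graph_edges_ok V E \<longleftrightarrow> (\<forall>e\<in>E. \<exists>u v. e = {u, v} \<and> u \<in> V \<and> v \<in> V \<and> u \<noteq> v)"

definition simple_graph :: "'a set \<Rightarrow> 'a set set \<Rightarrow> bool" where
  "simple_graph V E \<longleftrightarrow> finite V \<and> V \<noteq> {} \<and> graph_edges_ok V E"

definition degree :: "'a set \<Rightarrow> 'a set set \<Rightarrow> 'a \<Rightarrow> nat" where
  "degree V E v = card {u \<in> V. {u, v} \<in> E}"

definition is_path :: "'a set \<Rightarrow> 'a set set \<Rightarrow> 'a list \<Rightarrow> 'a \<Rightarrow> 'a \<Rightarrow> bool" where
  "is_path V E p u v \<longleftrightarrow> p \<noteq> [] \<and> hd p = u \<and> last p = v \<and> distinct p \<and> set p \<subseteq> V \<and>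
     (\<forall>i. Suc i < length p \<longrightarrow> {p ! i, p ! Suc i} \<in> E)"

definition connected_graph :: "'a set \<Rightarrow> 'a set set \<Rightarrow> bool" where
  "connected_graph V E \<longleftrightarrow> (\<forall>u\<in>V. \<forall>v\<in>V. \<exists>p. is_path V E p u v)"

definition is_cycle :: "'a set \<Rightarrow> 'a set set \<Rightarrow> 'a list \<Rightarrow> bool" where
  "is_cycle V E c \<longleftrightarrow> length c \<ge> 3 \<and> distinct c \<and> set c \<subseteq> V \<and>
     (\<forall>i. Suc i < length c \<longrightarrow> {c ! i, c ! Suc i} \<in> E) \<and> {last c, hd c} \<in> E"

definition acyclic_graph :: "'a set \<Rightarrow> 'a set set \<Rightarrow> bool" where
  "acyclic_graph V E \<longleftrightarrow> (\<nexists>c. is_cycle V E c)"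

definition is_tree :: "'a set \<Rightarrow> 'a set set \<Rightarrow> bool" where
  "is_tree V E \<longleftrightarrow> simple_graph V E \<and> connected_graph V E \<and> acyclic_graph V E"

definition leaves :: "'a set \<Rightarrow> 'a set set \<Rightarrow> 'a set" where
  "leaves V E = {v \<in> V. degree V E v \<le> 1}"

definition path_weight :: "('a set \<Rightarrow> real) \<Rightarrow> 'a list \<Rightarrow> real" where
  "path_weight w p = (\<Sum>i<length p - 1. w {p ! i, p ! Suc i})"

text \<open>Weight of the (unique, in a tree) path between u and v.\<close>
definition tree_dist :: "'a set \<Rightarrow> 'a set set \<Rightarrow> ('a set \<Rightarrow> real) \<Rightarrow> 'a \<Rightarrow> 'a \<Rightarrow> real" where
  "tree_dist V E w u v = (THE d. \<exists>p. is_path V E p u v \<and> d = path_weight w p)"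

definition real_interval :: "real set \<Rightarrow> bool" where
  "real_interval I \<longleftrightarrow> (\<forall>x\<in>I. \<forall>z\<in>I. \<forall>y. x \<le> y \<and> y \<le> z \<longrightarrow> y \<in> I)"

text \<open>Pairwise compatibility graph. Tree nodes have type 'a + nat: the leaves
  are exactly the copies Inl v of the vertices of H; internal nodes are arbitrary.\<close>
definition PCG :: "'a set \<Rightarrow> 'a set set \<Rightarrow> bool" where
  "PCG V E \<longleftrightarrow> graph_edges_ok V E \<and>
     (\<exists>(TV :: ('a + nat) set) TE w I.
        is_tree TV TE \<and> (\<forall>e\<in>TE. w e \<ge> 0) \<and> leaves TV TE = Inl ` V \<and>
        real_interval I \<and> I \<subseteq> {0..} \<and>
        (\<forall>u\<in>V. \<forall>v\<in>V. u \<noteq> v \<longrightarrow>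
            ({u, v} \<in> E \<longleftrightarrow> tree_dist TV TE w (Inl u) (Inl v) \<in> I)))"

definition k_OR_PCG :: "nat \<Rightarrow> 'a set \<Rightarrow> 'a set set \<Rightarrow> bool" where
  "k_OR_PCG k V E \<longleftrightarrow>
     (\<exists>Es :: nat \<Rightarrow> 'a set set. (\<forall>i<k. PCG V (Es i)) \<and> E = (\<Union>i<k. Es i))"

definition regular_graph :: "'a set \<Rightarrow> 'a set set \<Rightarrow> nat \<Rightarrow> bool" where
  "regular_graph V E d \<longleftrightarrow> (\<forall>v\<in>V. degree V E v = d)"

definition bipartite_graph :: "'a set \<Rightarrow> 'a set set \<Rightarrow> bool" where
  "bipartite_graph V E \<longleftrightarrow> (\<exists>A\<subseteq>V. \<forall>e\<in>E. card (e \<inter> A) = 1)"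

end

theory Submission
  imports Defs "HOL-Library.Transitive_Closure_Table"
begin

text \<open>Every graph of maximum degree at most \<open>2k\<close> is a \<open>k\<close>-OR-PCG; the three statements
  follow since \<open>3 \<le> 2 \<cdot> 2\<close>, \<open>\<Delta> = 2 (\<Delta> div 2)\<close> for even \<open>\<Delta>\<close> and \<open>\<Delta> \<le> 2 \<lceil>\<Delta> / 2\<rceil>\<close>.

  A graph of maximum degree two is a disjoint union of paths and cycles, and laying these out
  one after the other along the spine of a weighted caterpillar realises it as a PCG for the
  interval \<open>{4}\<close>.

  A graph of maximum degree \<open>2k\<close> splits into \<open>k\<close> such graphs (Petersen). An orientation
  minimising the sum of the squared imbalances \<open>out - in\<close> has all imbalances in \<open>{-1, 0, 1}\<close>,
  since otherwise reversing a directed path from a vertex of imbalance at least \<open>2\<close> to one of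
  negative imbalance would decrease the sum; hence out- and in-degrees are at most \<open>k\<close>.
  Splitting every vertex into an out-copy and an in-copy gives a bipartite graph of maximum
  degree \<open>k\<close>, which by Koenig's theorem has a proper \<open>k\<close>-edge-colouring. Each colour class
  leaves every vertex at most one outgoing and one incoming arc, i.e. maximum degree two.\<close>

section \<open>Paths and trees\<close>

lemma is_path_Cons_Cons_iff:
  "is_path V E (a # b # p) u v \<longleftrightarrow>
     a = u \<and> a \<in> V \<and> a \<notin> set (b # p) \<and> {a, b} \<in> E \<and> is_path V E (b # p) b v"
proof -
  have "(\<forall>i. Suc i < length (a # b # p) \<longrightarrow> {(a # b # p) ! i, (a # b # p) ! Suc i} \<in> E) \<longleftrightarrow>
        {a, b} \<in> E \<and> (\<forall>i. Suc i < length (b # p) \<longrightarrow> {(b # p) ! i, (b # p) ! Suc i} \<in> E)"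
    (is "?L \<longleftrightarrow> ?R")
  proof
    assume ?L
    then show ?R
      by (metis (no_types, lifting) Suc_less_eq length_Cons nth_Cons_0 nth_Cons_Suc zero_less_Suc)
  next
    assume ?R
    show ?L
    proof (intro allI impI)
      fix i assume "Suc i < length (a # b # p)"
      then show "{(a # b # p) ! i, (a # b # p) ! Suc i} \<in> E"
        using \<open>?R\<close> by (cases i) auto
    qed
  qed
  then show ?thesis unfolding is_path_def by auto
qed

lemma is_path_same_ends:
  assumes "is_path V E p a a" shows "p = [a]"
proof (rule ccontr)
  assume ne: "p \<noteq> [a]"
  have p: "p \<noteq> []" "hd p = a" "last p = a" "distinct p" using assms unfolding is_path_def by auto
  have "length p \<ge> 2"
  proof (rule ccontr)
    assume "\<not> length p \<ge> 2"
    then have "p = [hd p]" using p(1) by (cases p; cases "tl p") auto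
    then show False using ne p(2) by simp
  qed
  have "p ! 0 = p ! (length p - 1)" using p by (simp add: hd_conv_nth last_conv_nth)
  moreover have "0 < length p" "length p - 1 < length p" using \<open>length p \<ge> 2\<close> by auto
  ultimately have "0 = length p - 1" using nth_eq_iff_index_eq[OF p(4)] by blast
  then show False using \<open>length p \<ge> 2\<close> by simp
qed

lemma is_path_ends_in: "is_path V E p a b \<Longrightarrow> a \<in> V \<and> b \<in> V"
  unfolding is_path_def by (metis hd_in_set last_in_set subsetD)

lemma is_path_rev: "is_path V E p u v \<Longrightarrow> is_path V E (rev p) v u"
  unfolding is_path_def
proof (elim conjE, intro conjI)
  assume p: "p \<noteq> []" "distinct p" "\<forall>i. Suc i < length p \<longrightarrow> {p ! i, p ! Suc i} \<in> E"
    "hd p = u" "last p = v" "set p \<subseteq> V"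
  show "rev p \<noteq> []" "distinct (rev p)" "set (rev p) \<subseteq> V" using p by auto
  show "hd (rev p) = v" "last (rev p) = u" using p by (auto simp: hd_rev last_rev)
  show "\<forall>i. Suc i < length (rev p) \<longrightarrow> {rev p ! i, rev p ! Suc i} \<in> E"
  proof (intro allI impI)
    fix i assume i: "Suc i < length (rev p)"
    let ?j = "length p - Suc (Suc i)"
    have "{p ! ?j, p ! Suc ?j} \<in> E" using p i by auto
    moreover have "rev p ! i = p ! Suc ?j" "rev p ! Suc i = p ! ?j" using i
      by (auto simp: rev_nth Suc_diff_Suc)
    ultimately show "{rev p ! i, rev p ! Suc i} \<in> E" by (simp add: insert_commute)
  qed
qed

lemma path_weight_Cons_Cons: "path_weight w (a # b # p) = w {a, b} + path_weight w (b # p)"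
  unfolding path_weight_def by (simp add: sum.lessThan_Suc_shift del: sum.lessThan_Suc)

lemma path_weight_singleton: "path_weight w [a] = 0"
  unfolding path_weight_def by simp

lemma path_weight_snoc: "p \<noteq> [] \<Longrightarrow> path_weight w (p @ [b]) = path_weight w p + w {last p, b}"
  by (induction p rule: induct_list012) (simp_all add: path_weight_Cons_Cons path_weight_singleton)

lemma path_weight_rev: "path_weight w (rev p) = path_weight w p"
proof (induction p rule: induct_list012)
  case (3 x y zs)
  have "path_weight w (rev (x # y # zs)) = path_weight w (rev (y # zs)) + w {last (rev (y # zs)), x}"
    using path_weight_snoc[of "rev (y # zs)" w x] by simp
  also have "\<dots> = path_weight w (y # zs) + w {x, y}" using 3 by (simp add: insert_commute)
  finally show ?case by (simp add: path_weight_Cons_Cons)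
qed simp_all

definition unique_path_tree :: "'b set \<Rightarrow> 'b set set \<Rightarrow> bool" where
  "unique_path_tree TV TE \<longleftrightarrow> simple_graph TV TE \<and> connected_graph TV TE \<and>
     (\<forall>a b p q. is_path TV TE p a b \<and> is_path TV TE q a b \<longrightarrow> p = q)"

lemma unique_path_tree_is_tree:
  assumes "unique_path_tree TV TE" shows "is_tree TV TE"
proof -
  have "\<not> is_cycle TV TE c" for c
  proof
    assume c: "is_cycle TV TE c"
    have path: "is_path TV TE c (hd c) (last c)" using c unfolding is_cycle_def is_path_def by auto
    have "hd c \<noteq> last c"
    proof
      assume "hd c = last c"
      then have "c = [hd c]" using is_path_same_ends path by metis
      then have "length c = length [hd c]" by (rule arg_cong)
      then show False using c unfolding is_cycle_def by simp
    qed
    moreover have "{last c, hd c} \<in> TE" using c unfolding is_cycle_def by auto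
    ultimately have "is_path TV TE [hd c, last c] (hd c) (last c)"
      using is_path_ends_in[OF path] unfolding is_path_def by (auto simp: insert_commute)
    then have "c = [hd c, last c]" using path assms unfolding unique_path_tree_def by blast
    then have "length c = length [hd c, last c]" by (rule arg_cong)
    then show False using c unfolding is_cycle_def by simp
  qed
  then show ?thesis using assms unfolding unique_path_tree_def is_tree_def acyclic_graph_def by auto
qed

lemma tree_dist_eq_path_weight:
  assumes "unique_path_tree TV TE" "is_path TV TE p a b"
  shows "tree_dist TV TE w a b = path_weight w p"
proof -
  have "\<exists>!d. \<exists>p. is_path TV TE p a b \<and> d = path_weight w p"
    using assms unfolding unique_path_tree_def by blast
  then show ?thesis unfolding tree_dist_def by (rule the1_equality) (use assms(2) in blast)
qed

lemma unique_path_tree_singleton: "unique_path_tree {r} {}"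
proof -
  have "is_path {r} {} p a b \<longleftrightarrow> p = [r] \<and> a = r \<and> b = r" for p a b
  proof
    assume path: "is_path {r} {} p a b"
    then have "a = r" "b = r" using is_path_ends_in by fastforce+
    then show "p = [r] \<and> a = r \<and> b = r" using path is_path_same_ends by metis
  qed (auto simp: is_path_def)
  then show ?thesis
    unfolding unique_path_tree_def connected_graph_def simple_graph_def graph_edges_ok_def by auto
qed

context
  fixes TV :: "'b set" and TE :: "'b set set" and y z :: 'b
  assumes edges_ok: "graph_edges_ok TV TE" and y_in: "y \<in> TV" and z_notin: "z \<notin> TV"
begin

lemma pendant_edge_unique: "{c, z} \<in> insert {z, y} TE \<Longrightarrow> c = y"
proof -
  assume edge: "{c, z} \<in> insert {z, y} TE"
  have "{c, z} \<notin> TE" using edges_ok z_notin unfolding graph_edges_ok_def by (metis doubleton_eq_iff)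
  then have "{c, z} = {z, y}" using edge by simp
  then show "c = y" using y_in z_notin by (metis doubleton_eq_iff)
qed

lemma is_path_add_pendant:
  "is_path TV TE p a b \<Longrightarrow> is_path (insert z TV) (insert {z, y} TE) p a b"
  unfolding is_path_def by auto

lemma is_path_del_pendant:
  assumes "is_path (insert z TV) (insert {z, y} TE) p a b" "z \<notin> set p"
  shows "is_path TV TE p a b"
proof -
  have "{p ! i, p ! Suc i} \<in> TE" if i: "Suc i < length p" for i
  proof -
    have "{p ! i, p ! Suc i} \<in> insert {z, y} TE" using assms(1) i unfolding is_path_def by auto
    moreover have "p ! i \<noteq> z" "p ! Suc i \<noteq> z" using assms(2) i by (auto simp: in_set_conv_nth)
    ultimately show ?thesis by (auto simp: doubleton_eq_iff)
  qed
  then show ?thesis using assms unfolding is_path_def by auto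
qed

lemma is_path_avoids_pendant:
  assumes path: "is_path (insert z TV) (insert {z, y} TE) p a b" and "a \<noteq> z" "b \<noteq> z"
  shows "z \<notin> set p"
proof
  assume "z \<in> set p"
  then obtain i where i: "i < length p" "p ! i = z" by (auto simp: in_set_conv_nth)
  have p: "p \<noteq> []" "hd p = a" "last p = b" "distinct p"
    "\<forall>i. Suc i < length p \<longrightarrow> {p ! i, p ! Suc i} \<in> insert {z, y} TE"
    using path unfolding is_path_def by auto
  obtain j where j: "i = Suc j" using i p \<open>a \<noteq> z\<close> by (cases i) (auto simp: hd_conv_nth)
  have "Suc i < length p" using i p \<open>b \<noteq> z\<close> by (metis last_conv_nth Suc_lessI diff_Suc_1)
  \<comment> \<open>both neighbours of \<open>z\<close> on the path would have to be \<open>y\<close>\<close>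
  have "{p ! j, z} \<in> insert {z, y} TE" using p(5) i j by auto
  then have "p ! j = y" by (rule pendant_edge_unique)
  moreover have "p ! Suc i = y" using p(5) \<open>Suc i < length p\<close> i pendant_edge_unique
    by (metis insert_commute)
  ultimately have "j = Suc i" using nth_eq_iff_index_eq[OF p(4), of j "Suc i"] \<open>Suc i < length p\<close> j
    by simp
  then show False using j by simp
qed

lemma is_path_pendant_Cons:
  assumes "is_path TV TE q y b"
  shows "is_path (insert z TV) (insert {z, y} TE) (z # q) z b"
proof -
  obtain r where "q = y # r" using assms unfolding is_path_def by (cases q) auto
  moreover have "z \<notin> set q" using assms z_notin unfolding is_path_def by auto
  ultimately show ?thesis using is_path_add_pendant[OF assms] by (simp add: is_path_Cons_Cons_iff)
qed

lemma is_path_from_pendant: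
  assumes "is_path (insert z TV) (insert {z, y} TE) p z b" "b \<in> TV"
  shows "\<exists>q. p = z # q \<and> is_path TV TE q y b"
proof -
  obtain q where q: "p = z # q" using assms unfolding is_path_def by (cases p) auto
  then obtain c r where cr: "q = c # r" using assms z_notin unfolding is_path_def by (cases q) auto
  have "{z, c} \<in> insert {z, y} TE" "z \<notin> set q" "is_path (insert z TV) (insert {z, y} TE) q c b"
    using assms(1) unfolding q cr is_path_Cons_Cons_iff by auto
  then have "c = y" "is_path TV TE q c b"
    using pendant_edge_unique is_path_del_pendant by (auto simp: insert_commute)
  then show ?thesis using q by auto
qed

lemma connected_graph_add_pendant:
  assumes "connected_graph TV TE"
  shows "connected_graph (insert z TV) (insert {z, y} TE)"
  unfolding connected_graph_def
proof (intro ballI)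
  let ?V = "insert z TV" and ?E = "insert {z, y} TE"
  have from_z: "\<exists>p. is_path ?V ?E p z b" if "b \<in> TV" for b
    using assms y_in that is_path_pendant_Cons unfolding connected_graph_def by blast
  fix a b assume "a \<in> ?V" "b \<in> ?V"
  then consider "a = z" "b = z" | "a = z" "b \<in> TV" | "a \<in> TV" "b = z" | "a \<in> TV" "b \<in> TV" by auto
  then show "\<exists>p. is_path ?V ?E p a b"
  proof cases
    case 1
    then have "is_path ?V ?E [z] a b" unfolding is_path_def by auto
    then show ?thesis by blast
  next
    case 3
    then obtain p where "is_path ?V ?E p z a" using from_z by blast
    then show ?thesis using is_path_rev \<open>b = z\<close> by metis
  next
    case 4
    then show ?thesis using assms is_path_add_pendant unfolding connected_graph_def by blast
  qed (use from_z in blast)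
qed

lemma unique_path_tree_add_pendant:
  assumes tree: "unique_path_tree TV TE"
  shows "unique_path_tree (insert z TV) (insert {z, y} TE)"
proof -
  let ?V = "insert z TV" and ?E = "insert {z, y} TE"
  have unique: "\<And>a b p q. is_path TV TE p a b \<Longrightarrow> is_path TV TE q a b \<Longrightarrow> p = q"
    using tree unfolding unique_path_tree_def by blast
  have from_z: "p = q" if "is_path ?V ?E p z b" "is_path ?V ?E q z b" for p q b
  proof (cases "b = z")
    case True
    then show ?thesis using that is_path_same_ends by metis
  next
    case False
    then have "b \<in> TV" using is_path_ends_in[OF that(1)] by auto
    then show ?thesis using is_path_from_pendant[OF that(1)] is_path_from_pendant[OF that(2)] unique
      by metis
  qed
  have "p = q" if pq: "is_path ?V ?E p a b" "is_path ?V ?E q a b" for p q a b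
  proof -
    consider "a = z" | "b = z" | "a \<noteq> z" "b \<noteq> z" by blast
    then show ?thesis
    proof cases
      case 2
      then have "rev p = rev q" using from_z is_path_rev[OF pq(1)] is_path_rev[OF pq(2)] by blast
      then show ?thesis by simp
    next
      case 3
      then show ?thesis
        using is_path_avoids_pendant is_path_del_pendant unique pq by metis
    qed (use from_z pq in blast)
  qed
  moreover have "simple_graph ?V ?E"
    using tree edges_ok y_in z_notin
    unfolding unique_path_tree_def simple_graph_def graph_edges_ok_def by blast
  ultimately show ?thesis
    using connected_graph_add_pendant tree unfolding unique_path_tree_def by blast
qed

lemma tree_dist_add_pendant:
  assumes tree: "unique_path_tree TV TE"
    and dist: "\<forall>a\<in>TV. \<forall>b\<in>TV. tree_dist TV TE w a b = F a b"
    and F_z: "\<forall>b\<in>TV. F z b = w {z, y} + F y b \<and> F b z = F z b" and F_zz: "F z z = 0"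
  shows "\<forall>a\<in>insert z TV. \<forall>b\<in>insert z TV. tree_dist (insert z TV) (insert {z, y} TE) w a b = F a b"
proof -
  let ?V = "insert z TV" and ?E = "insert {z, y} TE"
  have tree': "unique_path_tree ?V ?E" using unique_path_tree_add_pendant[OF tree] .
  have old: "tree_dist ?V ?E w a b = F a b" if ab: "a \<in> TV" "b \<in> TV" for a b
  proof -
    obtain p where p: "is_path TV TE p a b" using tree ab
      unfolding unique_path_tree_def connected_graph_def by blast
    then show ?thesis using tree_dist_eq_path_weight[OF tree' is_path_add_pendant[OF p]]
        tree_dist_eq_path_weight[OF tree p] dist[rule_format, OF ab] by simp
  qed
  have new: "tree_dist ?V ?E w z b = F z b \<and> tree_dist ?V ?E w b z = F z b" if b: "b \<in> TV" for b
  proof -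
    obtain q where q: "is_path TV TE q y b" using tree y_in b
      unfolding unique_path_tree_def connected_graph_def by blast
    then obtain r where r: "q = y # r" unfolding is_path_def by (cases q) auto
    have zq: "is_path ?V ?E (z # q) z b" using is_path_pendant_Cons[OF q] .
    have "tree_dist ?V ?E w z b = w {z, y} + path_weight w q"
      using tree_dist_eq_path_weight[OF tree' zq] r by (simp add: path_weight_Cons_Cons)
    also have "path_weight w q = F y b" using tree_dist_eq_path_weight[OF tree q, of w] dist y_in b
      by simp
    finally have "tree_dist ?V ?E w z b = F z b" using F_z b by simp
    moreover have "tree_dist ?V ?E w b z = tree_dist ?V ?E w z b"
      using tree_dist_eq_path_weight[OF tree' is_path_rev[OF zq]] tree_dist_eq_path_weight[OF tree' zq]
        path_weight_rev[of w "z # q"] by simp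
    ultimately show ?thesis by simp
  qed
  have "tree_dist ?V ?E w z z = F z z"
    using tree_dist_eq_path_weight[OF tree', of "[z]"] F_zz
    by (simp add: is_path_def path_weight_singleton)
  then show ?thesis using old new F_z by auto
qed

end

section \<open>Caterpillars\<close>

text \<open>\<open>\<alpha> u + \<alpha> v + \<bar>x u - x v\<bar>\<close> is the leaf-to-leaf distance in a caterpillar whose spine
  nodes lie on a line at the positions \<open>x v\<close>, the leaf \<open>v\<close> hanging from its spine node by an
  edge of weight \<open>\<alpha> v\<close>.\<close>

definition caterpillar_rep :: "'a set \<Rightarrow> 'a set set \<Rightarrow> bool" where
  "caterpillar_rep V E \<longleftrightarrow> (\<exists>(x :: 'a \<Rightarrow> real) (\<alpha> :: 'a \<Rightarrow> real). (\<forall>v. 0 \<le> \<alpha> v) \<and>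
     (\<forall>u\<in>V. \<forall>v\<in>V. u \<noteq> v \<longrightarrow> ({u, v} \<in> E \<longleftrightarrow> \<alpha> u + \<alpha> v + \<bar>x u - x v\<bar> = 4)))"

locale caterpillar =
  fixes vs :: "'a list" and x :: "'a \<Rightarrow> real" and \<alpha> :: "'a \<Rightarrow> real"
  assumes distinct_vs: "distinct vs" and sorted_vs: "sorted (map x vs)"
    and hang_nonneg: "\<forall>v. 0 \<le> \<alpha> v"
begin

abbreviation "n \<equiv> length vs"

text \<open>Spine node \<open>Inr i\<close> carries the leaf \<open>Inl (vs ! i)\<close>.\<close>

definition node_pos :: "'a + nat \<Rightarrow> real" where
  "node_pos a = (case a of Inl v \<Rightarrow> x v | Inr i \<Rightarrow> x (vs ! i))"

definition node_hang :: "'a + nat \<Rightarrow> real" where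
  "node_hang a = (case a of Inl v \<Rightarrow> \<alpha> v | Inr i \<Rightarrow> 0)"

definition node_dist :: "'a + nat \<Rightarrow> 'a + nat \<Rightarrow> real" where
  "node_dist a b = (if a = b then 0 else node_hang a + node_hang b + \<bar>node_pos a - node_pos b\<bar>)"

definition edge_weight :: "('a + nat) set \<Rightarrow> real" where
  "edge_weight e = (SOME r. \<exists>a b. e = {a, b} \<and> r = node_dist a b)"

definition spine_edges :: "nat \<Rightarrow> ('a + nat) set set" where
  "spine_edges m = (\<lambda>i. {Inr i, Inr (Suc i)}) ` {..<m}"

definition cat_nodes :: "nat \<Rightarrow> ('a + nat) set" where
  "cat_nodes l = Inr ` {..<n} \<union> Inl ` set (take l vs)"

definition cat_edges :: "nat \<Rightarrow> ('a + nat) set set" where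
  "cat_edges l = spine_edges (n - 1) \<union> (\<lambda>i. {Inl (vs ! i), Inr i}) ` {..<l}"

lemma node_dist_sym: "node_dist a b = node_dist b a"
  unfolding node_dist_def by (auto simp: abs_minus_commute)

lemma edge_weight_doubleton: "edge_weight {a, b} = node_dist a b"
proof -
  have "\<exists>a' b'. {a, b} = {a', b'} \<and> edge_weight {a, b} = node_dist a' b'"
    unfolding edge_weight_def by (rule someI_ex) blast
  then show ?thesis using node_dist_sym by (auto simp: doubleton_eq_iff)
qed

lemma node_dist_nonneg: "node_dist a b \<ge> 0"
  using hang_nonneg unfolding node_dist_def node_hang_def by (cases a; cases b) auto

lemma spine_pos_mono: "i \<le> j \<Longrightarrow> j < n \<Longrightarrow> x (vs ! i) \<le> x (vs ! j)"
  using sorted_nth_mono[OF sorted_vs, of i j] by simp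

lemma spine_tree:
  assumes "m < n"
  shows "unique_path_tree (Inr ` {..m}) (spine_edges m) \<and>
    (\<forall>a\<in>Inr ` {..m}. \<forall>b\<in>Inr ` {..m}.
      tree_dist (Inr ` {..m}) (spine_edges m) edge_weight a b = node_dist a b)"
  using assms
proof (induction m)
  case 0
  have "is_path {Inr 0} {} [Inr 0] (Inr 0) (Inr 0)" unfolding is_path_def by auto
  then have "tree_dist {Inr 0} {} edge_weight (Inr 0) (Inr 0) = 0"
    using tree_dist_eq_path_weight[OF unique_path_tree_singleton] path_weight_singleton by metis
  then show ?case using unique_path_tree_singleton by (simp add: spine_edges_def node_dist_def)
next
  case (Suc m)
  let ?z = "Inr (Suc m) :: 'a + nat" and ?y = "Inr m :: 'a + nat"
  have IH: "unique_path_tree (Inr ` {..m}) (spine_edges m)"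
    "\<forall>a\<in>Inr ` {..m}. \<forall>b\<in>Inr ` {..m}.
      tree_dist (Inr ` {..m}) (spine_edges m) edge_weight a b = node_dist a b"
    using Suc by auto
  have nodes: "Inr ` {..Suc m} = insert ?z (Inr ` {..m})" by (auto simp: atMost_Suc)
  have edges: "spine_edges (Suc m) = insert {?z, ?y} (spine_edges m)"
    unfolding spine_edges_def by (auto simp: lessThan_Suc insert_commute)
  have F_z: "\<forall>b\<in>Inr ` {..m}. node_dist ?z b = edge_weight {?z, ?y} + node_dist ?y b \<and>
      node_dist b ?z = node_dist ?z b"
  proof
    fix b :: "'a + nat" assume "b \<in> Inr ` {..m}"
    then obtain j where j: "b = Inr j" "j \<le> m" by auto
    have "x (vs ! j) \<le> x (vs ! m)" "x (vs ! m) \<le> x (vs ! Suc m)" using spine_pos_mono Suc.prems j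
      by auto
    then show "node_dist ?z b = edge_weight {?z, ?y} + node_dist ?y b \<and> node_dist b ?z = node_dist ?z b"
      using j node_dist_sym unfolding edge_weight_doubleton node_dist_def node_pos_def node_hang_def
      by auto
  qed
  have ok: "graph_edges_ok (Inr ` {..m}) (spine_edges m)"
    using IH(1) unfolding unique_path_tree_def simple_graph_def by simp
  have y: "?y \<in> Inr ` {..m}" and z: "?z \<notin> Inr ` {..m}" by auto
  have "node_dist ?z ?z = 0" by (simp add: node_dist_def)
  then show ?case unfolding nodes edges
    using unique_path_tree_add_pendant[OF ok y z IH(1)] tree_dist_add_pendant[OF ok y z IH(1) IH(2) F_z]
    by blast
qed

lemma caterpillar_tree_upto:
  assumes "l \<le> n" "vs \<noteq> []"
  shows "unique_path_tree (cat_nodes l) (cat_edges l) \<and>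
    (\<forall>a\<in>cat_nodes l. \<forall>b\<in>cat_nodes l.
      tree_dist (cat_nodes l) (cat_edges l) edge_weight a b = node_dist a b)"
  using assms
proof (induction l)
  case 0
  obtain m where "n = Suc m" using 0 by (cases vs) auto
  then have "{..<n} = {..n - 1}" by (simp add: lessThan_Suc_atMost)
  then show ?case using spine_tree[of "n - 1"] 0 unfolding cat_nodes_def cat_edges_def by simp
next
  case (Suc l)
  let ?z = "Inl (vs ! l) :: 'a + nat" and ?y = "Inr l :: 'a + nat"
  have l: "l < n" using Suc by auto
  have IH: "unique_path_tree (cat_nodes l) (cat_edges l)"
    "\<forall>a\<in>cat_nodes l. \<forall>b\<in>cat_nodes l.
      tree_dist (cat_nodes l) (cat_edges l) edge_weight a b = node_dist a b"
    using Suc by auto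
  have nodes: "cat_nodes (Suc l) = insert ?z (cat_nodes l)"
    unfolding cat_nodes_def using l by (auto simp: take_Suc_conv_app_nth)
  have edges: "cat_edges (Suc l) = insert {?z, ?y} (cat_edges l)"
    unfolding cat_edges_def by (auto simp: lessThan_Suc)
  have "vs ! l \<notin> set (take l vs)"
    using distinct_vs l by (auto simp: in_set_conv_nth nth_eq_iff_index_eq)
  then have z: "?z \<notin> cat_nodes l" unfolding cat_nodes_def by auto
  have F_z: "\<forall>b\<in>cat_nodes l. node_dist ?z b = edge_weight {?z, ?y} + node_dist ?y b \<and>
      node_dist b ?z = node_dist ?z b"
    using z node_dist_sym unfolding edge_weight_doubleton node_dist_def node_pos_def node_hang_def
    by (auto split: sum.split)
  have ok: "graph_edges_ok (cat_nodes l) (cat_edges l)"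
    using IH(1) unfolding unique_path_tree_def simple_graph_def by simp
  have y: "?y \<in> cat_nodes l" unfolding cat_nodes_def using l by auto
  have "node_dist ?z ?z = 0" by (simp add: node_dist_def)
  then show ?case unfolding nodes edges
    using unique_path_tree_add_pendant[OF ok y z IH(1)] tree_dist_add_pendant[OF ok y z IH(1) IH(2) F_z]
    by blast
qed

lemma cat_nodes_all: "cat_nodes n = Inr ` {..<n} \<union> Inl ` set vs"
  unfolding cat_nodes_def by simp

lemma degree_leaf:
  assumes "v \<in> set vs" shows "degree (cat_nodes n) (cat_edges n) (Inl v) \<le> 1"
proof -
  obtain i where i: "i < n" "vs ! i = v" using assms by (auto simp: in_set_conv_nth)
  have "{c \<in> cat_nodes n. {c, Inl v} \<in> cat_edges n} \<subseteq> {Inr i}"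
    using i nth_eq_iff_index_eq[OF distinct_vs]
    unfolding cat_edges_def spine_edges_def by (auto simp: doubleton_eq_iff)
  from card_mono[OF _ this] show ?thesis unfolding degree_def by simp
qed

lemma degree_spine:
  assumes "i < n" "2 \<le> n" shows "2 \<le> degree (cat_nodes n) (cat_edges n) (Inr i)"
proof -
  obtain j where j: "j < n" "{Inr j, Inr i} \<in> cat_edges n"
  proof (cases "Suc i < n")
    case True
    then have "{Inr (Suc i), Inr i} \<in> spine_edges (n - 1)"
      unfolding spine_edges_def by (intro image_eqI[of _ _ i]) (auto simp: insert_commute)
    then show ?thesis using that[of "Suc i"] True unfolding cat_edges_def by auto
  next
    case False
    then obtain j where "i = Suc j" using assms by (cases i) auto
    then show ?thesis using that[of j] assms unfolding cat_edges_def spine_edges_def by auto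
  qed
  have "{Inl (vs ! i), Inr j} \<subseteq> {c \<in> cat_nodes n. {c, Inr i} \<in> cat_edges n}"
    using assms j unfolding cat_nodes_all cat_edges_def by auto
  then have "card {Inl (vs ! i), Inr j} \<le> degree (cat_nodes n) (cat_edges n) (Inr i)"
    unfolding degree_def by (rule card_mono[rotated]) (simp add: cat_nodes_all)
  then show ?thesis by simp
qed

lemma caterpillar_tree: "vs \<noteq> [] \<Longrightarrow> unique_path_tree (cat_nodes n) (cat_edges n)"
  using caterpillar_tree_upto by blast

lemma tree_dist_leaves:
  assumes "vs \<noteq> []" "u \<in> set vs" "v \<in> set vs" "u \<noteq> v"
  shows "tree_dist (cat_nodes n) (cat_edges n) edge_weight (Inl u) (Inl v) = \<alpha> u + \<alpha> v + \<bar>x u - x v\<bar>"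
proof -
  have "Inl u \<in> cat_nodes n" "Inl v \<in> cat_nodes n" using assms unfolding cat_nodes_all by auto
  then show ?thesis using caterpillar_tree_upto[OF order.refl assms(1)] assms(4)
    by (simp add: node_dist_def node_pos_def node_hang_def)
qed

lemma edge_weight_nonneg: "\<forall>e\<in>cat_edges l. edge_weight e \<ge> 0"
  unfolding cat_edges_def spine_edges_def using edge_weight_doubleton node_dist_nonneg by auto

lemma leaves_caterpillar:
  assumes "2 \<le> n" shows "leaves (cat_nodes n) (cat_edges n) = Inl ` set vs"
proof (intro set_eqI)
  fix a
  have "Inr i \<notin> leaves (cat_nodes n) (cat_edges n)" for i
    using degree_spine[OF _ assms, of i] unfolding leaves_def cat_nodes_all by auto
  moreover have "Inl v \<in> leaves (cat_nodes n) (cat_edges n) \<longleftrightarrow> v \<in> set vs" for v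
    using degree_leaf unfolding leaves_def cat_nodes_all by auto
  ultimately show "a \<in> leaves (cat_nodes n) (cat_edges n) \<longleftrightarrow> a \<in> Inl ` set vs"
    by (cases a) auto
qed

end

lemma PCG_singleton:
  assumes "graph_edges_ok {v} E" shows "PCG {v} E"
proof -
  have "leaves {Inl v :: 'a + nat} {} = Inl ` {v}" unfolding leaves_def degree_def by auto
  moreover have "real_interval {4}" "{4::real} \<subseteq> {0..}" unfolding real_interval_def by auto
  ultimately show ?thesis
    unfolding PCG_def using assms unique_path_tree_is_tree[OF unique_path_tree_singleton]
    by (intro conjI exI[of _ "{Inl v :: 'a + nat}"] exI[of _ "{} :: ('a + nat) set set"]) auto
qed

lemma caterpillar_rep_imp_PCG:
  assumes "finite V" "V \<noteq> {}" "graph_edges_ok V E" "caterpillar_rep V E"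
  shows "PCG V E"
proof -
  obtain x \<alpha> where nonneg: "\<forall>v. 0 \<le> (\<alpha> v :: real)"
    and rep: "\<forall>u\<in>V. \<forall>v\<in>V. u \<noteq> v \<longrightarrow> ({u, v} \<in> E \<longleftrightarrow> \<alpha> u + \<alpha> v + \<bar>(x :: 'a \<Rightarrow> real) u - x v\<bar> = 4)"
    using assms(4) unfolding caterpillar_rep_def by blast
  obtain vs where vs: "set vs = V" "distinct vs" "sorted (map x vs)"
    using finite_distinct_list[OF assms(1)] by (metis distinct_sort set_sort sorted_sort_key)
  interpret caterpillar vs x \<alpha> using vs nonneg by unfold_locales auto
  have interval: "real_interval {4}" "{4::real} \<subseteq> {0..}" unfolding real_interval_def by auto
  show ?thesis
  proof (cases "2 \<le> n")
    case True
    then have "vs \<noteq> []" by (cases vs) auto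
    then have "\<forall>u\<in>V. \<forall>v\<in>V. u \<noteq> v \<longrightarrow>
        ({u, v} \<in> E \<longleftrightarrow> tree_dist (cat_nodes n) (cat_edges n) edge_weight (Inl u) (Inl v) \<in> {4})"
      using rep tree_dist_leaves vs(1) by simp
    then show ?thesis
      unfolding PCG_def using assms(3) unique_path_tree_is_tree[OF caterpillar_tree] \<open>vs \<noteq> []\<close>
        edge_weight_nonneg leaves_caterpillar[OF True] vs(1) interval
      by (intro conjI exI[of _ "cat_nodes n"] exI[of _ "cat_edges n"] exI[of _ edge_weight]
          exI[of _ "{4::real}"]) auto
  next
    case False
    \<comment> \<open>a single vertex: the caterpillar would have a spine node of degree one\<close>
    then obtain v where "V = {v}" using assms(2) vs(1) by (cases vs; cases "tl vs") auto
    then show ?thesis using PCG_singleton[of v E] assms(3) by simp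
  qed
qed

section \<open>Graphs of maximum degree two\<close>

definition max_degree_le :: "'a set \<Rightarrow> 'a set set \<Rightarrow> nat \<Rightarrow> bool" where
  "max_degree_le V E k \<longleftrightarrow> (\<forall>v\<in>V. degree V E v \<le> k)"

lemma degree_mono: "finite V \<Longrightarrow> V' \<subseteq> V \<Longrightarrow> E' \<subseteq> E \<Longrightarrow> degree V' E' v \<le> degree V E v"
  unfolding degree_def by (rule card_mono) auto

lemma edge_endpoints: "graph_edges_ok V E \<Longrightarrow> {u, v} \<in> E \<Longrightarrow> u \<in> V \<and> v \<in> V \<and> u \<noteq> v"
  unfolding graph_edges_ok_def by (metis doubleton_eq_iff)

lemma graph_edges_ok_subset: "graph_edges_ok V E \<Longrightarrow> F \<subseteq> E \<Longrightarrow> graph_edges_ok V F"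
  unfolding graph_edges_ok_def by blast

lemma caterpillar_rep_by_index:
  assumes "distinct p" and "\<forall>i. 0 \<le> hang i"
    and "\<forall>i<length p. \<forall>j<length p. i \<noteq> j \<longrightarrow>
      ({p ! i, p ! j} \<in> E \<longleftrightarrow> hang i + hang j + \<bar>pos i - pos j\<bar> = (4::real))"
  shows "caterpillar_rep (set p) E"
proof -
  define idx where "idx v = (THE i. i < length p \<and> p ! i = v)" for v
  have idx: "idx (p ! i) = i" if "i < length p" for i
    unfolding idx_def by (rule the_equality) (use that nth_eq_iff_index_eq[OF assms(1)] in auto)
  have "{u, v} \<in> E \<longleftrightarrow> hang (idx u) + hang (idx v) + \<bar>pos (idx u) - pos (idx v)\<bar> = 4"
    if "u \<in> set p" "v \<in> set p" "u \<noteq> v" for u v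
  proof -
    obtain i j where "i < length p" "u = p ! i" "j < length p" "v = p ! j"
      using \<open>u \<in> set p\<close> \<open>v \<in> set p\<close> by (auto simp: in_set_conv_nth)
    then show ?thesis using assms(3) idx \<open>u \<noteq> v\<close> by auto
  qed
  then show ?thesis unfolding caterpillar_rep_def using assms(2)
    by (intro exI[of _ "\<lambda>v. pos (idx v)"] exI[of _ "\<lambda>v. hang (idx v)"]) simp
qed

lemma caterpillar_rep_path:
  assumes "distinct p"
    and "\<forall>i<length p. \<forall>j<length p. i \<noteq> j \<longrightarrow> ({p ! i, p ! j} \<in> E \<longleftrightarrow> j = Suc i \<or> i = Suc j)"
  shows "caterpillar_rep (set p) E"
proof -
  have "(j = Suc i \<or> i = Suc j) \<longleftrightarrow> \<bar>4 * real i - 4 * real j\<bar> = 4" for i j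
    by (cases "i < j") auto
  then show ?thesis
    using assms
    by (intro caterpillar_rep_by_index[where hang = "\<lambda>_. 0" and pos = "\<lambda>i. 4 * real i"]) auto
qed

lemma caterpillar_rep_triangle:
  assumes "distinct p" "length p = 3" "\<forall>i<length p. \<forall>j<length p. i \<noteq> j \<longrightarrow> {p ! i, p ! j} \<in> E"
  shows "caterpillar_rep (set p) E"
  using assms by (intro caterpillar_rep_by_index[where hang = "\<lambda>_. 2" and pos = "\<lambda>_. 0"]) auto

text \<open>An \<open>n\<close>-cycle \<open>v\<^sub>0 \<dots> v\<^sub>n\<^sub>-\<^sub>1\<close> is folded into a hairpin with \<open>g = (n + 1) div 2\<close>:
  \<open>v\<^sub>1, \<dots>, v\<^sub>g\<^sub>-\<^sub>1\<close> sit at \<open>4, 8, \<dots>\<close>, the vertices after \<open>v\<^sub>g\<close> come back at \<open>\<dots>, 10, 6\<close>,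
  and the two bends \<open>v\<^sub>0\<close> and \<open>v\<^sub>g\<close> hang at height \<open>3\<close> at the odd positions \<open>5\<close> and
  \<open>2n - 3\<close>, at distance \<open>1\<close> from exactly their two neighbours.\<close>

definition cycle_pos :: "nat \<Rightarrow> nat \<Rightarrow> int" where
  "cycle_pos n i = (if i = 0 then 5 else if i < (n + 1) div 2 then 4 * int i
     else if i = (n + 1) div 2 then 2 * int n - 3 else 4 * (int n - int i) + 2)"

definition cycle_hang :: "nat \<Rightarrow> nat \<Rightarrow> int" where
  "cycle_hang n i = (if i = 0 \<or> i = (n + 1) div 2 then 3 else 0)"

lemma cycle_rep_ordered:
  assumes n: "4 \<le> n" and ij: "i < j" "j < n"
  shows "(j = Suc i \<or> (i = 0 \<and> j = n - 1)) \<longleftrightarrow>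
    cycle_hang n i + cycle_hang n j + \<bar>cycle_pos n i - cycle_pos n j\<bar> = 4"
proof -
  define g where "g = (n + 1) div 2"
  have g: "2 \<le> g" "g < n - 1" "2 * g = n \<or> 2 * g = n + 1" unfolding g_def using n by auto
  note defs = cycle_pos_def cycle_hang_def g_def[symmetric]
  consider (z) "i = 0" | (a) "0 < i" "i < g" | (m) "i = g" | (b) "g < i" using ij by linarith
  then show ?thesis
  proof cases
    case z
    consider "0 < j" "j < g" | "j = g" | "g < j" using ij z by linarith
    then show ?thesis using z g ij unfolding defs by cases (auto simp: abs_if; presburger)+
  next
    case a
    consider "j < g" | "j = g" | "g < j" by linarith
    then show ?thesis
    proof cases
      case 3
      have "\<bar>4 * int i - (4 * (int n - int j) + 2)\<bar> \<noteq> 4" by presburger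
      then show ?thesis using a ij g 3 unfolding defs by (auto simp: abs_if; presburger)
    qed (use a ij g in \<open>unfold defs, auto simp: abs_if; presburger\<close>)+
  qed (use ij g in \<open>unfold defs, auto simp: abs_if; presburger\<close>)+
qed

lemma cycle_rep:
  assumes "4 \<le> n" "i \<noteq> j" "i < n" "j < n"
  shows "(j = Suc i \<or> i = Suc j \<or> (i = 0 \<and> j = n - 1) \<or> (j = 0 \<and> i = n - 1)) \<longleftrightarrow>
    real_of_int (cycle_hang n i) + real_of_int (cycle_hang n j) +
      \<bar>real_of_int (cycle_pos n i) - real_of_int (cycle_pos n j)\<bar> = 4"
proof -
  have "real_of_int (cycle_hang n i) + real_of_int (cycle_hang n j) +
      \<bar>real_of_int (cycle_pos n i) - real_of_int (cycle_pos n j)\<bar> = 4 \<longleftrightarrow>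
    cycle_hang n i + cycle_hang n j + \<bar>cycle_pos n i - cycle_pos n j\<bar> = 4"
    by linarith
  moreover have "cycle_hang n i + cycle_hang n j + \<bar>cycle_pos n i - cycle_pos n j\<bar> =
      cycle_hang n j + cycle_hang n i + \<bar>cycle_pos n j - cycle_pos n i\<bar>"
    by (simp add: abs_minus_commute)
  ultimately show ?thesis
    using assms cycle_rep_ordered[of n i j] cycle_rep_ordered[of n j i] by (cases "i < j") auto
qed

lemma caterpillar_rep_cycle:
  assumes "distinct p" "4 \<le> length p"
    and "\<forall>i<length p. \<forall>j<length p. i \<noteq> j \<longrightarrow> ({p ! i, p ! j} \<in> E \<longleftrightarrow>
       (j = Suc i \<or> i = Suc j \<or> (i = 0 \<and> j = length p - 1) \<or> (j = 0 \<and> i = length p - 1)))"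
  shows "caterpillar_rep (set p) E"
  using assms cycle_rep[OF assms(2)]
  by (intro caterpillar_rep_by_index[where hang = "\<lambda>i. real_of_int (cycle_hang (length p) i)"
        and pos = "\<lambda>i. real_of_int (cycle_pos (length p) i)"]) (auto simp: cycle_hang_def)

lemma caterpillar_rep_empty: "caterpillar_rep {} E"
  unfolding caterpillar_rep_def by blast

text \<open>Two representations are combined by shifting the second far to the right.\<close>

lemma caterpillar_rep_Un:
  assumes fin: "finite V1" "finite V2"
    and rep: "caterpillar_rep V1 E" "caterpillar_rep V2 E"
    and no_edges: "\<forall>u\<in>V1. \<forall>v\<in>V2. {u, v} \<notin> E"
  shows "caterpillar_rep (V1 \<union> V2) E"
proof -
  obtain x1 a1 where nn1: "\<forall>v. 0 \<le> (a1 v :: real)"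
    and rep1: "\<forall>u\<in>V1. \<forall>v\<in>V1. u \<noteq> v \<longrightarrow> ({u, v} \<in> E \<longleftrightarrow> a1 u + a1 v + \<bar>(x1 :: 'a \<Rightarrow> real) u - x1 v\<bar> = 4)"
    using rep(1) unfolding caterpillar_rep_def by blast
  obtain x2 a2 where nn2: "\<forall>v. 0 \<le> (a2 v :: real)"
    and rep2: "\<forall>u\<in>V2. \<forall>v\<in>V2. u \<noteq> v \<longrightarrow> ({u, v} \<in> E \<longleftrightarrow> a2 u + a2 v + \<bar>(x2 :: 'a \<Rightarrow> real) u - x2 v\<bar> = 4)"
    using rep(2) unfolding caterpillar_rep_def by blast
  define s where "s = (\<Sum>v\<in>V1. \<bar>x1 v\<bar>) + (\<Sum>v\<in>V2. \<bar>x2 v\<bar>) + 5"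
  define x where "x v = (if v \<in> V1 then x1 v else x2 v + s)" for v
  define a where "a v = (if v \<in> V1 then a1 v else a2 v)" for v
  have far: "a u + a v + \<bar>x u - x v\<bar> \<noteq> 4" if "u \<in> V1" "v \<in> V2 - V1" for u v
  proof -
    have "\<bar>x1 u\<bar> \<le> (\<Sum>v\<in>V1. \<bar>x1 v\<bar>)" "\<bar>x2 v\<bar> \<le> (\<Sum>v\<in>V2. \<bar>x2 v\<bar>)"
      using that fin by (auto intro: member_le_sum)
    then have "5 \<le> \<bar>x u - x v\<bar>" using that unfolding x_def s_def by auto
    moreover have "0 \<le> a u" "0 \<le> a v" using nn1 nn2 unfolding a_def by auto
    ultimately show ?thesis by linarith
  qed
  have "{u, v} \<in> E \<longleftrightarrow> a u + a v + \<bar>x u - x v\<bar> = 4"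
    if uv: "u \<in> V1 \<union> V2" "v \<in> V1 \<union> V2" "u \<noteq> v" for u v
  proof -
    consider "u \<in> V1" "v \<in> V1" | "u \<in> V1" "v \<in> V2 - V1" | "u \<in> V2 - V1" "v \<in> V1"
      | "u \<in> V2 - V1" "v \<in> V2 - V1" using uv by blast
    then show ?thesis
    proof cases
      case 1
      then show ?thesis using rep1 uv(3) by (simp add: x_def a_def)
    next
      case 2
      then show ?thesis using far no_edges by auto
    next
      case 3
      have "a u + a v + \<bar>x u - x v\<bar> = a v + a u + \<bar>x v - x u\<bar>" by (simp add: abs_minus_commute)
      then show ?thesis using far[of v u] no_edges 3 by (auto simp: insert_commute)
    next
      case 4
      then have "x u - x v = x2 u - x2 v" "a u = a2 u" "a v = a2 v" by (auto simp: x_def a_def)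
      then show ?thesis using rep2 4 uv(3) by simp
    qed
  qed
  moreover have "\<forall>v. 0 \<le> a v" using nn1 nn2 by (simp add: a_def)
  ultimately show ?thesis unfolding caterpillar_rep_def by blast
qed

definition chain :: "'a set \<Rightarrow> 'a set set \<Rightarrow> 'a list \<Rightarrow> bool" where
  "chain V E p \<longleftrightarrow> p \<noteq> [] \<and> distinct p \<and> set p \<subseteq> V \<and> (\<forall>i. Suc i < length p \<longrightarrow> {p ! i, p ! Suc i} \<in> E)"

lemma chain_edge: "chain V E p \<Longrightarrow> Suc i < length p \<Longrightarrow> {p ! i, p ! Suc i} \<in> E"
  unfolding chain_def by auto

lemma chain_Cons:
  assumes "chain V E p" "{u, hd p} \<in> E" "u \<notin> set p" "u \<in> V"
  shows "chain V E (u # p)"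
  using assms unfolding chain_def by (auto simp: nth_Cons hd_conv_nth split: nat.split)

lemma chain_snoc:
  assumes "chain V E p" "{u, last p} \<in> E" "u \<notin> set p" "u \<in> V"
  shows "chain V E (p @ [u])"
  unfolding chain_def
proof (intro conjI allI impI)
  fix i assume i: "Suc i < length (p @ [u])"
  show "{(p @ [u]) ! i, (p @ [u]) ! Suc i} \<in> E"
  proof (cases "Suc i < length p")
    case True then show ?thesis using assms(1) by (simp add: nth_append chain_def)
  next
    case False
    then have "Suc i = length p" "i = length p - 1" using i by simp_all
    then have "(p @ [u]) ! i = last p" "(p @ [u]) ! Suc i = u"
      using assms(1) unfolding chain_def by (auto simp: nth_append last_conv_nth)
    then show ?thesis using assms(2) by (simp add: insert_commute)
  qed
qed (use assms in \<open>auto simp: chain_def\<close>)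

lemma longest_chain_exists:
  assumes "finite V" "v \<in> V"
  shows "\<exists>p. chain V E p \<and> (\<forall>q. chain V E q \<longrightarrow> length q \<le> length p)"
proof -
  have "length q < Suc (card V)" if "chain V E q" for q
    using that assms(1) distinct_card card_mono unfolding chain_def by (metis less_Suc_eq_le)
  moreover have "chain V E [v]" using assms(2) unfolding chain_def by auto
  ultimately show ?thesis by (metis ex_has_greatest_nat)
qed

lemma longest_chain_ends_closed:
  assumes "chain V E p" "\<forall>q. chain V E q \<longrightarrow> length q \<le> length p"
    and "u \<in> V" "{u, hd p} \<in> E \<or> {u, last p} \<in> E"
  shows "u \<in> set p"
proof (rule ccontr)
  assume "u \<notin> set p"
  then have "chain V E (u # p) \<or> chain V E (p @ [u])"
    using assms chain_Cons chain_snoc by metis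
  then show False using assms(2) by fastforce
qed

context
  fixes V :: "'a set" and E :: "'a set set"
  assumes finite_V: "finite V" and max_deg: "max_degree_le V E 2"
begin

lemma chain_interior_neighbour:
  assumes p: "chain V E p" and i: "0 < i" "Suc i < length p" and u: "u \<in> V" "{u, p ! i} \<in> E"
  shows "u = p ! (i - 1) \<or> u = p ! Suc i"
proof (rule ccontr)
  assume u_new: "\<not> (u = p ! (i - 1) \<or> u = p ! Suc i)"
  obtain k where k: "i = Suc k" using i by (cases i) auto
  have "{p ! (i - 1), p ! i} \<in> E" "{p ! i, p ! Suc i} \<in> E"
    using chain_edge[OF p, of k] chain_edge[OF p, of i] i k by auto
  then have "{p ! (i - 1), p ! Suc i, u} \<subseteq> {w \<in> V. {w, p ! i} \<in> E}"
    using p i u unfolding chain_def by (auto simp: insert_commute)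
  moreover have "p ! (i - 1) \<noteq> p ! Suc i"
    using p i nth_eq_iff_index_eq unfolding chain_def by fastforce
  ultimately have "3 \<le> degree V E (p ! i)"
    unfolding degree_def using u_new finite_V card_mono[of _ "{p ! (i - 1), p ! Suc i, u}"]
    by (metis (no_types, lifting) card_3_iff finite_subset mem_Collect_eq subsetI)
  moreover have "p ! i \<in> V" using p i unfolding chain_def by auto
  ultimately show False using max_deg unfolding max_degree_le_def by fastforce
qed

lemma chain_chords:
  assumes p: "chain V E p" and ij: "i < j" "j < length p" and e: "{p ! i, p ! j} \<in> E"
  shows "j = Suc i \<or> (i = 0 \<and> j = length p - 1)"
proof -
  have d: "distinct p" "set p \<subseteq> V" using p unfolding chain_def by auto
  show ?thesis
  proof (cases "i = 0")
    case False
    have "p ! j \<in> V" using d ij by auto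
    then have "p ! j = p ! (i - 1) \<or> p ! j = p ! Suc i"
      using chain_interior_neighbour[OF p, of i "p ! j"] False ij e by (auto simp: insert_commute)
    then show ?thesis using nth_eq_iff_index_eq[OF d(1)] ij by auto
  next
    case True
    show ?thesis
    proof (cases "Suc j < length p")
      case True
      have "p ! i \<in> V" using d ij by auto
      then have "p ! i = p ! (j - 1) \<or> p ! i = p ! Suc j"
        using chain_interior_neighbour[OF p, of j "p ! i"] True ij e by auto
      then show ?thesis using nth_eq_iff_index_eq[OF d(1)] ij True by auto
    qed (use True ij in auto)
  qed
qed

lemma chain_closed:
  assumes p: "chain V E p" and ends: "\<forall>u\<in>V. {u, hd p} \<in> E \<or> {u, last p} \<in> E \<longrightarrow> u \<in> set p"
    and a: "a \<in> set p" and u: "u \<in> V" "{u, a} \<in> E"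
  shows "u \<in> set p"
proof -
  obtain i where i: "i < length p" "a = p ! i" using a by (auto simp: in_set_conv_nth)
  consider "i = 0" | "Suc i = length p" | "0 < i" "Suc i < length p" using i by linarith
  then show ?thesis
  proof cases
    case 1
    then have "a = hd p" using i p unfolding chain_def by (simp add: hd_conv_nth)
    then show ?thesis using ends u by blast
  next
    case 2
    then have "i = length p - 1" by simp
    then have "a = last p" using i p unfolding chain_def by (simp add: last_conv_nth)
    then show ?thesis using ends u by blast
  next
    case 3
    then have "u = p ! (i - 1) \<or> u = p ! Suc i"
      using chain_interior_neighbour[OF p _ _ u(1)] u(2) i by auto
    then show ?thesis using 3 by auto
  qed
qed

lemma caterpillar_rep_chain:
  assumes p: "chain V E p"
  shows "caterpillar_rep (set p) E"
proof -
  let ?n = "length p"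
  define closed where "closed = ({p ! 0, p ! (?n - 1)} \<in> E)"
  have d: "distinct p" using p unfolding chain_def by simp
  have ordered: "{p ! i, p ! j} \<in> E \<longleftrightarrow> j = Suc i \<or> (i = 0 \<and> j = ?n - 1 \<and> closed)"
    if "i < j" "j < ?n" for i j
    using chain_chords[OF p that] chain_edge[OF p, of i] that unfolding closed_def by auto
  have adj: "{p ! i, p ! j} \<in> E \<longleftrightarrow>
      j = Suc i \<or> i = Suc j \<or> ((i = 0 \<and> j = ?n - 1 \<or> j = 0 \<and> i = ?n - 1) \<and> closed)"
    if "i \<noteq> j" "i < ?n" "j < ?n" for i j
    using ordered[of i j] ordered[of j i] that by (cases "i < j") (auto simp: insert_commute)
  consider "closed" "4 \<le> ?n" | "closed" "?n = 3" | "\<not> closed \<or> ?n \<le> 2" by linarith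
  then show ?thesis
  proof cases
    case 1
    then show ?thesis using adj by (intro caterpillar_rep_cycle[OF d]) auto
  next
    case 2
    then show ?thesis using adj by (intro caterpillar_rep_triangle[OF d]) auto
  next
    case 3
    then show ?thesis using adj by (intro caterpillar_rep_path[OF d]) auto
  qed
qed

end

lemma max_degree_2_caterpillar_rep:
  "finite V \<Longrightarrow> max_degree_le V E 2 \<Longrightarrow> caterpillar_rep V E"
proof (induction "card V" arbitrary: V rule: less_induct)
  case less
  show ?case
  proof (cases "V = {}")
    case True then show ?thesis using caterpillar_rep_empty by simp
  next
    case False
    then obtain p where p: "chain V E p" and longest: "\<forall>q. chain V E q \<longrightarrow> length q \<le> length p"
      using longest_chain_exists[OF less.prems(1)] by blast
    let ?S = "set p"
    have S: "?S \<subseteq> V" using p unfolding chain_def by auto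
    have closed: "u \<in> ?S" if "a \<in> ?S" "u \<in> V" "{u, a} \<in> E" for a u
      using chain_closed[OF less.prems p] longest_chain_ends_closed[OF p longest] that by blast
    have "hd p \<in> ?S" using p unfolding chain_def by simp
    then have "V - ?S \<subset> V" using S by blast
    then have smaller: "card (V - ?S) < card V" using less.prems(1)
      by (rule psubset_card_mono[rotated])
    have "max_degree_le (V - ?S) E 2"
      using less.prems degree_mono[of V "V - ?S" E E] unfolding max_degree_le_def
      by (meson DiffD1 Diff_subset order.trans order.refl)
    then have "caterpillar_rep (V - ?S) E" using less.hyps[OF smaller] less.prems(1) by simp
    moreover have "\<forall>u\<in>?S. \<forall>v\<in>V - ?S. {u, v} \<notin> E" using closed by (auto simp: insert_commute)
    ultimately have "caterpillar_rep (?S \<union> (V - ?S)) E"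
      using caterpillar_rep_Un caterpillar_rep_chain[OF less.prems p] less.prems(1) by blast
    then show ?thesis using S by (simp add: Un_absorb1)
  qed
qed

section \<open>Balanced orientations\<close>

definition orientation :: "'a set \<Rightarrow> 'a set set \<Rightarrow> ('a \<times> 'a) set \<Rightarrow> bool" where
  "orientation V E R \<longleftrightarrow> R \<subseteq> V \<times> V \<and> (\<forall>a b. (a, b) \<in> R \<longrightarrow> {a, b} \<in> E) \<and>
     (\<forall>e\<in>E. \<exists>a b. e = {a, b} \<and> (a, b) \<in> R) \<and> (\<forall>a b. (a, b) \<in> R \<longrightarrow> (b, a) \<notin> R)"

definition out_degree :: "('a \<times> 'a) set \<Rightarrow> 'a \<Rightarrow> nat" where
  "out_degree R z = card {c. (z, c) \<in> R}"

definition in_degree :: "('a \<times> 'a) set \<Rightarrow> 'a \<Rightarrow> nat" where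
  "in_degree R z = card {c. (c, z) \<in> R}"

definition imbalance :: "('a \<times> 'a) set \<Rightarrow> 'a \<Rightarrow> int" where
  "imbalance R z = int (out_degree R z) - int (in_degree R z)"

definition reverse_arc :: "('a \<times> 'a) set \<Rightarrow> 'a \<Rightarrow> 'a \<Rightarrow> ('a \<times> 'a) set" where
  "reverse_arc R a b = insert (b, a) (R - {(a, b)})"

lemma orientation_finite: "finite V \<Longrightarrow> orientation V E R \<Longrightarrow> finite R"
  unfolding orientation_def by (meson finite_SigmaI finite_subset)

lemma orientation_finite_out: "finite V \<Longrightarrow> orientation V E R \<Longrightarrow> finite {c. (z, c) \<in> R}"
  by (rule finite_subset[of _ V]) (auto simp: orientation_def)

lemma orientation_finite_in: "finite V \<Longrightarrow> orientation V E R \<Longrightarrow> finite {c. (c, z) \<in> R}"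
  by (rule finite_subset[of _ V]) (auto simp: orientation_def)

lemma orientation_subset: "orientation V E R \<Longrightarrow> R \<subseteq> V \<times> V"
  unfolding orientation_def by simp

lemma orientation_edge: "orientation V E R \<Longrightarrow> (a, b) \<in> R \<Longrightarrow> {a, b} \<in> E"
  unfolding orientation_def by simp

lemma orientation_cover: "orientation V E R \<Longrightarrow> e \<in> E \<Longrightarrow> \<exists>a b. e = {a, b} \<and> (a, b) \<in> R"
  unfolding orientation_def by simp

lemma orientation_asym: "orientation V E R \<Longrightarrow> (a, b) \<in> R \<Longrightarrow> (b, a) \<notin> R"
  unfolding orientation_def by blast

lemma orientation_exists:
  assumes "graph_edges_ok V E"
  shows "\<exists>R. orientation V E R"
proof -
  define pick :: "'a set \<Rightarrow> 'a \<times> 'a"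
    where "pick e = (SOME ab. e = {fst ab, snd ab} \<and> fst ab \<noteq> snd ab)" for e
  have pick: "e = {fst (pick e), snd (pick e)} \<and> fst (pick e) \<noteq> snd (pick e)" if "e \<in> E" for e
  proof -
    obtain u v where "e = {u, v}" "u \<noteq> v" using assms \<open>e \<in> E\<close> unfolding graph_edges_ok_def by blast
    then have "(\<lambda>ab. e = {fst ab, snd ab} \<and> fst ab \<noteq> snd ab) (u, v)" by simp
    then show ?thesis unfolding pick_def by (rule someI)
  qed
  have arc: "{a, b} \<in> E \<and> pick {a, b} = (a, b) \<and> a \<noteq> b" if ab: "(a, b) \<in> pick ` E" for a b
  proof -
    obtain e where "e \<in> E" "pick e = (a, b)" using ab by auto
    then show ?thesis using pick[of e] by auto
  qed
  have "orientation V E (pick ` E)"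
    unfolding orientation_def
  proof (intro conjI allI impI ballI)
    show "pick ` E \<subseteq> V \<times> V"
    proof
      fix ab assume ab: "ab \<in> pick ` E"
      obtain a b where [simp]: "ab = (a, b)" by (cases ab)
      have "{a, b} \<in> E" using arc ab by simp
      then show "ab \<in> V \<times> V" using edge_endpoints[OF assms] by simp
    qed
    fix a b assume ab: "(a, b) \<in> pick ` E"
    then show "{a, b} \<in> E" using arc by blast
    show "(b, a) \<notin> pick ` E"
    proof
      assume "(b, a) \<in> pick ` E"
      then have "pick {b, a} = (b, a)" using arc by blast
      then show False using arc[OF ab] by (simp add: insert_commute)
    qed
  next
    fix e assume "e \<in> E"
    then show "\<exists>a b. e = {a, b} \<and> (a, b) \<in> pick ` E"
      using pick[of e] by (intro exI[of _ "fst (pick e)"] exI[of _ "snd (pick e)"]) auto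
  qed
  then show ?thesis by blast
qed

lemma orientation_converse:
  assumes "orientation V E R" shows "orientation V E (R\<inverse>)"
  unfolding orientation_def
proof (intro conjI allI impI ballI)
  show "R\<inverse> \<subseteq> V \<times> V" using orientation_subset[OF assms] by auto
  fix a b assume "(a, b) \<in> R\<inverse>"
  then have "(b, a) \<in> R" by simp
  then show "{a, b} \<in> E" "(b, a) \<notin> R\<inverse>"
    using orientation_edge[OF assms, of b a] orientation_asym[OF assms]
    by (auto simp: insert_commute)
next
  fix e assume "e \<in> E"
  then obtain a b where "e = {a, b}" "(a, b) \<in> R" using orientation_cover[OF assms] by blast
  then show "\<exists>a b. e = {a, b} \<and> (a, b) \<in> R\<inverse>" by (auto simp: insert_commute)
qed

lemma out_degree_converse: "out_degree (R\<inverse>) z = in_degree R z"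
  unfolding out_degree_def in_degree_def by simp

lemma imbalance_converse: "imbalance (R\<inverse>) z = - imbalance R z"
  unfolding imbalance_def out_degree_def in_degree_def by simp

lemma degree_eq_out_degree_plus_in_degree:
  assumes "finite V" "orientation V E R" "z \<in> V"
  shows "degree V E z = out_degree R z + in_degree R z"
proof -
  have "{u \<in> V. {u, z} \<in> E} = {c. (z, c) \<in> R} \<union> {c. (c, z) \<in> R}"
  proof (intro set_eqI iffI)
    fix u assume "u \<in> {u \<in> V. {u, z} \<in> E}"
    then obtain a b where "{u, z} = {a, b}" "(a, b) \<in> R" using orientation_cover[OF assms(2)]
      by blast
    then show "u \<in> {c. (z, c) \<in> R} \<union> {c. (c, z) \<in> R}" by (auto simp: doubleton_eq_iff)
  next
    fix u assume "u \<in> {c. (z, c) \<in> R} \<union> {c. (c, z) \<in> R}"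
    then show "u \<in> {u \<in> V. {u, z} \<in> E}"
      using orientation_edge[OF assms(2), of z u] orientation_edge[OF assms(2), of u z]
        orientation_subset[OF assms(2)] by (auto simp: insert_commute)
  qed
  moreover have "{c. (z, c) \<in> R} \<inter> {c. (c, z) \<in> R} = {}" using orientation_asym[OF assms(2)]
    by blast
  ultimately show ?thesis unfolding degree_def out_degree_def in_degree_def
    using card_Un_disjoint[OF orientation_finite_out[OF assms(1,2)] orientation_finite_in[OF assms(1,2)]]
    by simp
qed

lemma reverse_arc_orientation:
  assumes R: "orientation V E R" and ab: "(a, b) \<in> R"
  shows "orientation V E (reverse_arc R a b)"
  unfolding orientation_def reverse_arc_def
proof (intro conjI allI impI ballI)
  show "insert (b, a) (R - {(a, b)}) \<subseteq> V \<times> V" using orientation_subset[OF R] ab by auto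
  fix x y assume "(x, y) \<in> insert (b, a) (R - {(a, b)})"
  then show "{x, y} \<in> E" "(y, x) \<notin> insert (b, a) (R - {(a, b)})"
    using orientation_edge[OF R] orientation_asym[OF R] ab by (auto simp: insert_commute)
next
  fix e assume "e \<in> E"
  then obtain x y where "e = {x, y}" "(x, y) \<in> R" using orientation_cover[OF R] by blast
  then show "\<exists>x y. e = {x, y} \<and> (x, y) \<in> insert (b, a) (R - {(a, b)})"
    by (cases "(x, y) = (a, b)") (auto simp: insert_commute)
qed

lemma out_degree_reverse_arc:
  assumes "finite R" "(a, b) \<in> R" "(b, a) \<notin> R"
  shows "int (out_degree (reverse_arc R a b) z) =
    int (out_degree R z) - (if z = a then 1 else 0) + (if z = b then 1 else 0)"
proof -
  have fin: "finite {c. (z, c) \<in> R}"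
    by (rule finite_subset[OF _ finite_imageI[OF assms(1), of snd]]) force
  have "a \<noteq> b" using assms(2,3) by auto
  consider "z = a" | "z = b" | "z \<noteq> a" "z \<noteq> b" by blast
  then show ?thesis
  proof cases
    case 1
    then have "{c. (z, c) \<in> reverse_arc R a b} = {c. (z, c) \<in> R} - {b}"
      unfolding reverse_arc_def using \<open>a \<noteq> b\<close> by auto
    moreover have "b \<in> {c. (z, c) \<in> R}" using 1 assms(2) by simp
    moreover from this have "0 < card {c. (z, c) \<in> R}" using fin card_gt_0_iff by blast
    ultimately show ?thesis using 1 \<open>a \<noteq> b\<close> fin unfolding out_degree_def by (simp add: of_nat_diff)
  next
    case 2
    then have "{c. (z, c) \<in> reverse_arc R a b} = insert a {c. (z, c) \<in> R}"
      unfolding reverse_arc_def using \<open>a \<noteq> b\<close> by auto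
    moreover have "a \<notin> {c. (z, c) \<in> R}" using 2 assms(3) by simp
    ultimately show ?thesis using 2 \<open>a \<noteq> b\<close> fin unfolding out_degree_def by simp
  next
    case 3
    then have "{c. (z, c) \<in> reverse_arc R a b} = {c. (z, c) \<in> R}" unfolding reverse_arc_def by auto
    then show ?thesis using 3 unfolding out_degree_def by simp
  qed
qed

lemma in_degree_reverse_arc:
  assumes "finite R" "(a, b) \<in> R" "(b, a) \<notin> R"
  shows "int (in_degree (reverse_arc R a b) z) =
    int (in_degree R z) - (if z = b then 1 else 0) + (if z = a then 1 else 0)"
proof -
  have "(reverse_arc R a b)\<inverse> = reverse_arc (R\<inverse>) b a" unfolding reverse_arc_def by auto
  then have "in_degree (reverse_arc R a b) z = out_degree (reverse_arc (R\<inverse>) b a) z"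
    by (simp flip: out_degree_converse)
  also have "int \<dots> = int (out_degree (R\<inverse>) z) - (if z = b then 1 else 0) + (if z = a then 1 else 0)"
    using assms by (intro out_degree_reverse_arc) auto
  finally show ?thesis by (simp only: out_degree_converse)
qed

lemma imbalance_reverse_arc:
  assumes "finite V" "orientation V E R" "(a, b) \<in> R"
  shows "imbalance (reverse_arc R a b) z =
    imbalance R z - (if z = a then 2 else 0) + (if z = b then 2 else 0)"
proof -
  have R: "finite R" "(b, a) \<notin> R"
    using orientation_finite[OF assms(1,2)] orientation_asym[OF assms(2,3)] by auto
  show ?thesis
    using out_degree_reverse_arc[OF R(1) assms(3) R(2), of z]
      in_degree_reverse_arc[OF R(1) assms(3) R(2), of z]
    unfolding imbalance_def by (cases "z = a"; cases "z = b") auto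
qed

lemma rtrancl_path_mono_on:
  "rtrancl_path r x xs y \<Longrightarrow> (\<forall>a\<in>set (x # xs). \<forall>b\<in>set (x # xs). r a b \<longrightarrow> r' a b) \<Longrightarrow>
    rtrancl_path r' x xs y"
proof (induction rule: rtrancl_path.induct)
  case (step x y ys z)
  then show ?case by (simp add: rtrancl_path.step)
qed (rule rtrancl_path.base)

lemma reverse_path_imbalance:
  assumes "finite V"
  shows "orientation V E R \<Longrightarrow> rtrancl_path (\<lambda>a b. (a, b) \<in> R) u qs w \<Longrightarrow> distinct (u # qs) \<Longrightarrow>
    \<exists>R'. orientation V E R' \<and>
      (\<forall>z. imbalance R' z = imbalance R z - (if z = u then 2 else 0) + (if z = w then 2 else 0))"
proof (induction qs arbitrary: R u)
  case Nil
  then show ?case by (auto elim: rtrancl_path.cases)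
next
  case (Cons y ys)
  from Cons.prems(2) have uy: "(u, y) \<in> R" and path: "rtrancl_path (\<lambda>a b. (a, b) \<in> R) y ys w"
    by (auto elim: rtrancl_path.cases)
  let ?R = "reverse_arc R u y"
  have "rtrancl_path (\<lambda>a b. (a, b) \<in> ?R) y ys w"
  proof (rule rtrancl_path_mono_on[OF path], intro ballI impI)
    fix a b assume "a \<in> set (y # ys)" "(a, b) \<in> R"
    then show "(a, b) \<in> ?R" using Cons.prems(3) unfolding reverse_arc_def by auto
  qed
  then have "\<exists>R'. orientation V E R' \<and>
      (\<forall>z. imbalance R' z = imbalance ?R z - (if z = y then 2 else 0) + (if z = w then 2 else 0))"
    using Cons.IH[OF reverse_arc_orientation[OF Cons.prems(1) uy]] Cons.prems(3) by simp
  then obtain R' where "orientation V E R'"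
    "\<forall>z. imbalance R' z = imbalance ?R z - (if z = y then 2 else 0) + (if z = w then 2 else 0)"
    by blast
  then show ?case using imbalance_reverse_arc[OF assms Cons.prems(1) uy] by auto
qed

definition imbalance_energy :: "'a set \<Rightarrow> ('a \<times> 'a) set \<Rightarrow> int" where
  "imbalance_energy V R = (\<Sum>z\<in>V. (imbalance R z)\<^sup>2)"

lemma sum_imbalance_closed_nonpos:
  assumes "finite S" "finite V" "orientation V E R" and closed: "\<forall>w\<in>S. \<forall>c. (w, c) \<in> R \<longrightarrow> c \<in> S"
  shows "(\<Sum>w\<in>S. imbalance R w) \<le> 0"
proof -
  let ?Out = "SIGMA w:S. {c. (w, c) \<in> R}" and ?In = "SIGMA w:S. {c. (c, w) \<in> R}"
  have "card ?Out \<le> card ?In"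
    using closed \<open>finite S\<close> orientation_finite_in[OF assms(2,3)]
    by (intro card_inj_on_le[of "\<lambda>(w, c). (c, w)"]) (auto simp: inj_on_def)
  moreover have "(\<Sum>w\<in>S. out_degree R w) = card ?Out" "(\<Sum>w\<in>S. in_degree R w) = card ?In"
    unfolding out_degree_def in_degree_def
    using card_SigmaI \<open>finite S\<close> orientation_finite_out[OF assms(2,3)]
      orientation_finite_in[OF assms(2,3)]
    by auto
  ultimately show ?thesis unfolding imbalance_def sum_subtractf
    by (simp del: of_nat_sum add: of_nat_sum[symmetric])
qed

lemma reachable_negative_imbalance:
  assumes "finite V" "orientation V E R" "u \<in> V" "imbalance R u > 0"
  shows "\<exists>w. (\<lambda>a b. (a, b) \<in> R)\<^sup>*\<^sup>* u w \<and> w \<in> V \<and> imbalance R w < 0"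
proof (rule ccontr)
  assume none: "\<not> ?thesis"
  define S where "S = {w. (\<lambda>a b. (a, b) \<in> R)\<^sup>*\<^sup>* u w}"
  have S_V: "S \<subseteq> V"
  proof
    fix w assume "w \<in> S"
    then have "(\<lambda>a b. (a, b) \<in> R)\<^sup>*\<^sup>* u w" unfolding S_def by simp
    then show "w \<in> V"
      by (induction rule: rtranclp_induct) (use assms(3) orientation_subset[OF assms(2)] in auto)
  qed
  then have "finite S" using assms(1) finite_subset by blast
  moreover have "\<forall>w\<in>S. \<forall>c. (w, c) \<in> R \<longrightarrow> c \<in> S"
    unfolding S_def by (auto intro: rtranclp.rtrancl_into_rtrancl)
  ultimately have "(\<Sum>w\<in>S. imbalance R w) \<le> 0"
    using sum_imbalance_closed_nonpos assms(1,2) by blast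
  moreover have "\<forall>w\<in>S. 0 \<le> imbalance R w" using none S_V unfolding S_def by force
  then have "imbalance R u \<le> (\<Sum>w\<in>S. imbalance R w)"
    using member_le_sum[of u S] \<open>finite S\<close> unfolding S_def by auto
  ultimately show False using assms(4) by simp
qed

lemma sum_squares_transfer:
  fixes f g :: "'a \<Rightarrow> int"
  assumes "finite V" "u \<in> V" "w \<in> V" "u \<noteq> w"
    and "\<forall>z. g z = f z - (if z = u then 2 else 0) + (if z = w then 2 else 0)"
  shows "(\<Sum>z\<in>V. (g z)\<^sup>2) = (\<Sum>z\<in>V. (f z)\<^sup>2) + 8 - 4 * f u + 4 * f w"
proof -
  have "(g z)\<^sup>2 = (f z)\<^sup>2 + (if z = u then 4 - 4 * f u else 0) + (if z = w then 4 * f w + 4 else 0)" for z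
    using assms(4)
    by (cases "z = u"; cases "z = w") (simp_all add: assms(5) power2_eq_square algebra_simps)
  then have "(\<Sum>z\<in>V. (g z)\<^sup>2) = (\<Sum>z\<in>V. (f z)\<^sup>2) + (\<Sum>z\<in>V. if z = u then 4 - 4 * f u else 0) +
      (\<Sum>z\<in>V. if z = w then 4 * f w + 4 else 0)"
    by (simp add: sum.distrib)
  then show ?thesis using assms(1-3) by (simp add: sum.delta)
qed

lemma energy_minimal_imbalance_le_1:
  assumes "finite V" "orientation V E R"
    and "\<forall>R'. orientation V E R' \<longrightarrow> imbalance_energy V R \<le> imbalance_energy V R'"
    and "u \<in> V"
  shows "imbalance R u \<le> 1"
proof (rule ccontr)
  assume "\<not> imbalance R u \<le> 1"
  obtain w where w: "(\<lambda>a b. (a, b) \<in> R)\<^sup>*\<^sup>* u w" "w \<in> V" "imbalance R w < 0"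
    using reachable_negative_imbalance[OF assms(1,2,4)] \<open>\<not> imbalance R u \<le> 1\<close> by auto
  obtain xs where "rtrancl_path (\<lambda>a b. (a, b) \<in> R) u xs w"
    using w(1) rtranclp_eq_rtrancl_path by metis
  then obtain xs' where "rtrancl_path (\<lambda>a b. (a, b) \<in> R) u xs' w" "distinct (u # xs')"
    by (rule rtrancl_path_distinct)
  \<comment> \<open>reversing a path from \<open>u\<close> to \<open>w\<close> would decrease the energy\<close>
  then obtain R' where R': "orientation V E R'"
    "\<forall>z. imbalance R' z = imbalance R z - (if z = u then 2 else 0) + (if z = w then 2 else 0)"
    using reverse_path_imbalance[OF assms(1,2)] by blast
  have "u \<noteq> w" using \<open>\<not> imbalance R u \<le> 1\<close> w(3) by auto
  then have "imbalance_energy V R' = imbalance_energy V R + 8 - 4 * imbalance R u + 4 * imbalance R w"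
    unfolding imbalance_energy_def using sum_squares_transfer[OF assms(1,4) w(2) _ R'(2)] by blast
  then show False using assms(3) R'(1) \<open>\<not> imbalance R u \<le> 1\<close> w(3) by force
qed

lemma balanced_orientation_exists:
  assumes "finite V" "graph_edges_ok V E"
  shows "\<exists>R. orientation V E R \<and> (\<forall>z\<in>V. \<bar>imbalance R z\<bar> \<le> 1)"
proof -
  obtain R0 where "orientation V E R0" using orientation_exists[OF assms(2)] by blast
  then obtain R where R: "orientation V E R"
    and min: "\<forall>R'. orientation V E R' \<longrightarrow> nat (imbalance_energy V R) \<le> nat (imbalance_energy V R')"
    using ex_has_least_nat[of "orientation V E" R0 "\<lambda>R. nat (imbalance_energy V R)"] by blast
  have "0 \<le> imbalance_energy V R'" for R' unfolding imbalance_energy_def by (simp add: sum_nonneg)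
  then have min': "\<forall>R'. orientation V E R' \<longrightarrow> imbalance_energy V R \<le> imbalance_energy V R'"
    using min by (metis nat_le_eq_zle)
  \<comment> \<open>the converse orientation has the same energy, so it is minimal as well\<close>
  moreover have "imbalance_energy V (R\<inverse>) = imbalance_energy V R"
    unfolding imbalance_energy_def imbalance_converse by simp
  ultimately have "- imbalance R z \<le> 1" if "z \<in> V" for z
    using energy_minimal_imbalance_le_1[OF assms(1) orientation_converse[OF R]] that
    by (simp add: imbalance_converse)
  then have "\<forall>z\<in>V. \<bar>imbalance R z\<bar> \<le> 1"
    using energy_minimal_imbalance_le_1[OF assms(1) R min'] by (simp add: abs_le_iff)
  then show ?thesis using R by blast
qed

lemma balanced_orientation_degrees:
  assumes "finite V" "graph_edges_ok V E" "max_degree_le V E (2 * k)"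
  shows "\<exists>R. orientation V E R \<and> (\<forall>z\<in>V. out_degree R z \<le> k \<and> in_degree R z \<le> k)"
proof -
  obtain R where R: "orientation V E R" "\<forall>z\<in>V. \<bar>imbalance R z\<bar> \<le> 1"
    using balanced_orientation_exists[OF assms(1,2)] by blast
  have "out_degree R z + in_degree R z \<le> 2 * k" if "z \<in> V" for z
  proof -
    have "degree V E z \<le> 2 * k" using assms(3) \<open>z \<in> V\<close> unfolding max_degree_le_def by blast
    then show ?thesis using degree_eq_out_degree_plus_in_degree[OF assms(1) R(1) \<open>z \<in> V\<close>] by simp
  qed
  then show ?thesis using R unfolding imbalance_def by fastforce
qed

section \<open>Koenig's edge colouring theorem\<close>

definition proper_edge_colouring :: "('v set \<Rightarrow> nat) \<Rightarrow> 'v set set \<Rightarrow> bool" where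
  "proper_edge_colouring col E \<longleftrightarrow> (\<forall>e\<in>E. \<forall>e'\<in>E. e \<noteq> e' \<longrightarrow> e \<inter> e' \<noteq> {} \<longrightarrow> col e \<noteq> col e')"

definition bipartite_by :: "('v \<Rightarrow> bool) \<Rightarrow> 'v set set \<Rightarrow> bool" where
  "bipartite_by side E \<longleftrightarrow> (\<forall>e\<in>E. \<exists>a b. e = {a, b} \<and> side a \<noteq> side b)"

lemma proper_edge_colouring_subset:
  "proper_edge_colouring col E \<Longrightarrow> F \<subseteq> E \<Longrightarrow> proper_edge_colouring col F"
  unfolding proper_edge_colouring_def by blast

lemma bipartite_by_subset: "bipartite_by side E \<Longrightarrow> F \<subseteq> E \<Longrightarrow> bipartite_by side F"
  unfolding bipartite_by_def by blast

definition component :: "'a set set \<Rightarrow> 'a \<Rightarrow> 'a set" where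
  "component E b = {v. (\<lambda>u v. {u, v} \<in> E)\<^sup>*\<^sup>* b v}"

lemma component_edge_closed:
  assumes "graph_edges_ok V E" "e \<in> E" "z \<in> e" "z \<in> component E b"
  shows "e \<subseteq> component E b"
proof -
  have step: "v \<in> component E b" if "u \<in> component E b" "{u, v} \<in> E" for u v
    using that unfolding component_def by (simp add: rtranclp.rtrancl_into_rtrancl)
  obtain x y where "e = {x, y}" using assms(1,2) unfolding graph_edges_ok_def by blast
  then show ?thesis using assms(2-4) step[of x y] step[of y x] by (auto simp: insert_commute)
qed

lemma is_path_of_rtrancl_path:
  assumes "graph_edges_ok V E"
  shows "rtrancl_path (\<lambda>u v. {u, v} \<in> E) x xs y \<Longrightarrow> distinct (x # xs) \<Longrightarrow> x \<in> V \<Longrightarrow>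
    is_path V E (x # xs) x y"
proof (induction rule: rtrancl_path.induct)
  case (base x)
  then show ?case unfolding is_path_def by simp
next
  case (step x y ys z)
  then have "is_path V E (y # ys) y z" using edge_endpoints[OF assms] by auto
  then show ?case using step by (simp add: is_path_Cons_Cons_iff)
qed

lemma component_path:
  assumes "graph_edges_ok V E" "b \<in> V" "a \<in> component E b"
  shows "\<exists>p. is_path V E p b a"
proof -
  obtain xs where "rtrancl_path (\<lambda>u v. {u, v} \<in> E) b xs a"
    using assms(3) unfolding component_def by (auto simp: rtranclp_eq_rtrancl_path)
  then obtain xs' where "rtrancl_path (\<lambda>u v. {u, v} \<in> E) b xs' a" "distinct (b # xs')"
    by (rule rtrancl_path_distinct)
  then show ?thesis using is_path_of_rtrancl_path[OF assms(1)] assms(2) by blast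
qed

lemma proper_edge_colouring_insert:
  assumes "proper_edge_colouring col F" "\<forall>e\<in>F. e \<inter> e0 \<noteq> {} \<longrightarrow> col e \<noteq> c"
  shows "proper_edge_colouring (col(e0 := c)) (insert e0 F)"
  using assms unfolding proper_edge_colouring_def by (auto simp: Int_commute)

lemma proper_edge_colouring_swap:
  assumes proper: "proper_edge_colouring col F"
    and C: "\<forall>e\<in>C. e \<in> F \<and> (col e = \<alpha> \<or> col e = \<beta>)"
    and closed: "\<forall>e\<in>C. \<forall>e'\<in>F. (col e' = \<alpha> \<or> col e' = \<beta>) \<longrightarrow> e \<inter> e' \<noteq> {} \<longrightarrow> e' \<in> C"
  shows "proper_edge_colouring (\<lambda>e. if e \<in> C then (if col e = \<alpha> then \<beta> else \<alpha>) else col e) F"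
  unfolding proper_edge_colouring_def
proof (intro ballI impI)
  fix e e' assume e: "e \<in> F" "e' \<in> F" "e \<noteq> e'" "e \<inter> e' \<noteq> {}"
  then have differ: "col e \<noteq> col e'" using proper unfolding proper_edge_colouring_def by blast
  have "e' \<in> C" if "e \<in> C" "col e' = \<alpha> \<or> col e' = \<beta>" using closed that e by blast
  moreover have "e \<in> C" if "e' \<in> C" "col e = \<alpha> \<or> col e = \<beta>" using closed that e by blast
  ultimately show "(if e \<in> C then (if col e = \<alpha> then \<beta> else \<alpha>) else col e) \<noteq>
      (if e' \<in> C then (if col e' = \<alpha> then \<beta> else \<alpha>) else col e')"
    using differ C by auto
qed

text \<open>Along a path of \<open>\<alpha>\<close>- and \<open>\<beta>\<close>-edges leaving \<open>b\<close>, where \<open>b\<close> sees no \<open>\<beta>\<close>-edge, the colours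
  alternate starting with \<open>\<alpha>\<close>, and so do the sides; a path ending with a \<open>\<beta>\<close>-edge has even
  length.\<close>

lemma alternating_path_same_side:
  assumes path: "is_path V H p b a" and "a \<noteq> b"
    and proper: "proper_edge_colouring col H" and two: "\<forall>e\<in>H. col e = \<alpha> \<or> col e = \<beta>"
    and bip: "bipartite_by side H"
    and b_free: "\<forall>e\<in>H. b \<in> e \<longrightarrow> col e \<noteq> \<beta>" and a_free: "\<forall>e\<in>H. a \<in> e \<longrightarrow> col e \<noteq> \<alpha>"
  shows "side a = side b"
proof -
  let ?n = "length p"
  have p0: "p \<noteq> []" "hd p = b" "last p = a" "distinct p" using path unfolding is_path_def by auto
  then have "2 \<le> ?n" using \<open>a \<noteq> b\<close> by (cases p; cases "tl p") auto
  then have p: "p ! 0 = b" "p ! (?n - 1) = a" "distinct p" "2 \<le> ?n"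
    using p0 by (auto simp: hd_conv_nth last_conv_nth)
  have edge: "{p ! i, p ! Suc i} \<in> H" if "Suc i < ?n" for i using path that unfolding is_path_def
    by blast
  have colour: "col {p ! i, p ! Suc i} = (if even i then \<alpha> else \<beta>)" if "Suc i < ?n" for i
    using that
  proof (induction i)
    case 0
    then show ?case using edge two b_free p(1) by fastforce
  next
    case (Suc i)
    have "p ! i \<noteq> p ! Suc (Suc i)" using nth_eq_iff_index_eq[OF p(3)] Suc.prems by simp
    then have "{p ! i, p ! Suc i} \<noteq> {p ! Suc i, p ! Suc (Suc i)}" by (auto simp: doubleton_eq_iff)
    then have "col {p ! i, p ! Suc i} \<noteq> col {p ! Suc i, p ! Suc (Suc i)}"
      using proper edge[of i] edge[of "Suc i"] Suc.prems unfolding proper_edge_colouring_def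
      by force
    then show ?case using Suc two edge[of "Suc i"] by auto
  qed
  have side: "side (p ! i) = (if even i then side b else \<not> side b)" if "i < ?n" for i
    using that
  proof (induction i)
    case (Suc i)
    obtain x y where "{p ! i, p ! Suc i} = {x, y}" "side x \<noteq> side y"
      using bip edge[of i] Suc.prems unfolding bipartite_by_def by blast
    then have "side (p ! i) \<noteq> side (p ! Suc i)" by (auto simp: doubleton_eq_iff)
    then show ?case using Suc by auto
  qed (use p(1) in simp)
  obtain m where m: "?n = Suc (Suc m)" using p(4) by (metis add_2_eq_Suc le_Suc_ex)
  have "col {p ! m, p ! Suc m} \<noteq> \<alpha>" using a_free edge[of m] p(2) m by auto
  then have "odd m" using colour[of m] m by auto
  then show ?thesis using side[of "Suc m"] p(2) m by simp
qed

lemma kempe_chain_avoids: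
  assumes ok: "graph_edges_ok V F" and bip: "bipartite_by side F" and "b \<in> V" "side a \<noteq> side b"
    and proper: "proper_edge_colouring col F"
    and a_free: "\<forall>e\<in>F. a \<in> e \<longrightarrow> col e \<noteq> \<alpha>" and b_free: "\<forall>e\<in>F. b \<in> e \<longrightarrow> col e \<noteq> \<beta>"
  shows "a \<notin> component {e \<in> F. col e = \<alpha> \<or> col e = \<beta>} b"
proof
  let ?H = "{e \<in> F. col e = \<alpha> \<or> col e = \<beta>}"
  assume "a \<in> component ?H b"
  moreover have "graph_edges_ok V ?H" by (rule graph_edges_ok_subset[OF ok]) auto
  ultimately obtain p where path: "is_path V ?H p b a"
    using component_path[OF _ \<open>b \<in> V\<close>] by blast
  have "a \<noteq> b" using \<open>side a \<noteq> side b\<close> by blast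
  moreover have "proper_edge_colouring col ?H" by (rule proper_edge_colouring_subset[OF proper]) auto
  moreover have "\<forall>e\<in>?H. col e = \<alpha> \<or> col e = \<beta>" by simp
  moreover have "bipartite_by side ?H" by (rule bipartite_by_subset[OF bip]) auto
  moreover have "\<forall>e\<in>?H. b \<in> e \<longrightarrow> col e \<noteq> \<beta>" "\<forall>e\<in>?H. a \<in> e \<longrightarrow> col e \<noteq> \<alpha>"
    using a_free b_free by auto
  ultimately have "side a = side b" by (rule alternating_path_same_side[OF path])
  then show False using \<open>side a \<noteq> side b\<close> by simp
qed

text \<open>The Kempe chain argument: swapping \<open>\<alpha>\<close> and \<open>\<beta>\<close> on the \<open>\<alpha>\<beta>\<close>-component of \<open>b\<close> frees \<open>\<alpha>\<close> at
  \<open>b\<close>; by bipartiteness this component does not reach \<open>a\<close>, where \<open>\<alpha>\<close> stays free.\<close>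

lemma kempe_recolour:
  assumes ok: "graph_edges_ok V F" and bip: "bipartite_by side F"
    and ab: "a \<in> V" "b \<in> V" "side a \<noteq> side b" "{a, b} \<notin> F"
    and col: "\<forall>e\<in>F. col e < k" "proper_edge_colouring col F" "\<alpha> < k" "\<beta> < k"
    and a_free: "\<forall>e\<in>F. a \<in> e \<longrightarrow> col e \<noteq> \<alpha>" and b_free: "\<forall>e\<in>F. b \<in> e \<longrightarrow> col e \<noteq> \<beta>"
  shows "\<exists>col'. (\<forall>e\<in>insert {a, b} F. col' e < k) \<and> proper_edge_colouring col' (insert {a, b} F)"
proof -
  define H where "H = {e \<in> F. col e = \<alpha> \<or> col e = \<beta>}"
  define C where "C = {e \<in> H. e \<subseteq> component H b}"
  define swapped where "swapped e = (if e \<in> C then (if col e = \<alpha> then \<beta> else \<alpha>) else col e)" for e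
  have okH: "graph_edges_ok V H" by (rule graph_edges_ok_subset[OF ok]) (auto simp: H_def)
  have "a \<notin> component H b"
    unfolding H_def by (rule kempe_chain_avoids[OF ok bip ab(2,3) col(2) a_free b_free])
  have C_closed: "e' \<in> C" if e: "e \<in> C" "e' \<in> F" "col e' = \<alpha> \<or> col e' = \<beta>" "e \<inter> e' \<noteq> {}" for e e'
  proof -
    obtain z where "z \<in> e" "z \<in> e'" using e(4) by blast
    then have "z \<in> component H b" using e(1) unfolding C_def by blast
    then show ?thesis using component_edge_closed[OF okH, of e' z b] e(2,3) \<open>z \<in> e'\<close>
      unfolding C_def H_def by blast
  qed
  have "proper_edge_colouring swapped F"
    unfolding swapped_def
    by (rule proper_edge_colouring_swap[OF col(2)]) (use C_closed in \<open>auto simp: C_def H_def\<close>)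
  moreover have "swapped e \<noteq> \<alpha>" if "e \<in> F" "z \<in> e" "z \<in> {a, b}" for e z
  proof (cases "e \<in> C")
    case True
    then have "z = b" using \<open>a \<notin> component H b\<close> that unfolding C_def by auto
    then show ?thesis using True b_free that unfolding swapped_def C_def H_def by auto
  next
    case False
    have "b \<in> component H b" unfolding component_def by simp
    then have "col e = \<alpha> \<Longrightarrow> z = b \<Longrightarrow> e \<in> C"
      using component_edge_closed[OF okH] that unfolding C_def H_def by blast
    then show ?thesis using False a_free that unfolding swapped_def by auto
  qed
  ultimately have "proper_edge_colouring (swapped({a, b} := \<alpha>)) (insert {a, b} F)"
    by (intro proper_edge_colouring_insert) auto
  moreover have "\<forall>e\<in>insert {a, b} F. (swapped({a, b} := \<alpha>)) e < k" using col unfolding swapped_def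
    by auto
  ultimately show ?thesis by blast
qed

lemma card_incident_edges_le_degree:
  assumes "finite V" "graph_edges_ok V F"
  shows "finite {e \<in> F. z \<in> e} \<and> card {e \<in> F. z \<in> e} \<le> degree V F z"
proof -
  have sub: "{e \<in> F. z \<in> e} \<subseteq> (\<lambda>u. {u, z}) ` {u \<in> V. {u, z} \<in> F}"
  proof
    fix e assume e: "e \<in> {e \<in> F. z \<in> e}"
    then obtain x y where xy: "e = {x, y}" "x \<in> V" "y \<in> V" using assms(2)
      unfolding graph_edges_ok_def by blast
    then have "e = {y, z} \<and> y \<in> V \<or> e = {x, z} \<and> x \<in> V" using e by (auto simp: insert_commute)
    then show "e \<in> (\<lambda>u. {u, z}) ` {u \<in> V. {u, z} \<in> F}" using e by blast
  qed
  have fin: "finite {u \<in> V. {u, z} \<in> F}" using assms(1) by simp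
  show ?thesis
    using finite_subset[OF sub finite_imageI[OF fin]] card_mono[OF finite_imageI[OF fin] sub]
      card_image_le[OF fin, of "\<lambda>u. {u, z}"]
    unfolding degree_def by linarith
qed

lemma missing_colour:
  assumes "finite V" "graph_edges_ok V F" "degree V F z < k"
  shows "\<exists>\<alpha><k. \<forall>e\<in>F. z \<in> e \<longrightarrow> col e \<noteq> \<alpha>"
proof (rule ccontr)
  assume "\<not> ?thesis"
  then have "{..<k} \<subseteq> col ` {e \<in> F. z \<in> e}" by blast
  moreover have fin: "finite {e \<in> F. z \<in> e}" "card {e \<in> F. z \<in> e} \<le> degree V F z"
    using card_incident_edges_le_degree[OF assms(1,2)] by auto
  ultimately have "card {..<k} \<le> card (col ` {e \<in> F. z \<in> e})" by (intro card_mono) auto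
  also have "\<dots> \<le> card {e \<in> F. z \<in> e}" using card_image_le[OF fin(1)] .
  finally show False using fin(2) assms(3) by simp
qed

lemma degree_insert_edge_less:
  assumes "finite V" "{w, z} \<notin> F" "w \<in> V"
  shows "degree V F z < degree V (insert {w, z} F) z"
proof -
  have "{u \<in> V. {u, z} \<in> F} \<subset> {u \<in> V. {u, z} \<in> insert {w, z} F}" using assms(2,3) by blast
  then show ?thesis unfolding degree_def by (rule psubset_card_mono[rotated]) (use assms(1) in simp)
qed

lemma graph_edges_ok_finite:
  assumes "finite V" "graph_edges_ok V E" shows "finite E"
proof (rule finite_subset)
  show "E \<subseteq> Pow V"
  proof
    fix e assume "e \<in> E"
    then obtain u v where "e = {u, v}" "u \<in> V" "v \<in> V" using assms(2) unfolding graph_edges_ok_def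
      by blast
    then show "e \<in> Pow V" by simp
  qed
qed (use assms(1) in simp)

lemma proper_edge_colouring_extend:
  assumes "finite V" and E: "graph_edges_ok V (insert {a, b} F)" "bipartite_by side (insert {a, b} F)"
    "max_degree_le V (insert {a, b} F) k" and "{a, b} \<notin> F"
    and col: "\<forall>e\<in>F. col e < k" "proper_edge_colouring col F"
  shows "\<exists>col'. (\<forall>e\<in>insert {a, b} F. col' e < k) \<and> proper_edge_colouring col' (insert {a, b} F)"
proof -
  have okF: "graph_edges_ok V F" using graph_edges_ok_subset[OF E(1)] by blast
  have bipF: "bipartite_by side F" using bipartite_by_subset[OF E(2)] by blast
  obtain x y where "{a, b} = {x, y}" "side x \<noteq> side y" using E(2) unfolding bipartite_by_def by blast
  then have sides: "side a \<noteq> side b" by (auto simp: doubleton_eq_iff)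
  have a_b: "a \<in> V" "b \<in> V" using edge_endpoints[OF E(1), of a b] by auto
  have "degree V F a < degree V (insert {a, b} F) a" "degree V F b < degree V (insert {a, b} F) b"
    using degree_insert_edge_less[OF assms(1), of b a F] degree_insert_edge_less[OF assms(1), of a b F]
      \<open>{a, b} \<notin> F\<close> a_b by (simp_all add: insert_commute)
  then have deg: "degree V F a < k" "degree V F b < k"
    using E(3) a_b unfolding max_degree_le_def by (auto intro: less_le_trans)
  obtain \<alpha> where \<alpha>: "\<alpha> < k" "\<forall>e\<in>F. a \<in> e \<longrightarrow> col e \<noteq> \<alpha>"
    using missing_colour[OF assms(1) okF deg(1)] by blast
  obtain \<beta> where \<beta>: "\<beta> < k" "\<forall>e\<in>F. b \<in> e \<longrightarrow> col e \<noteq> \<beta>"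
    using missing_colour[OF assms(1) okF deg(2)] by blast
  show ?thesis by (rule kempe_recolour[OF okF bipF a_b sides \<open>{a, b} \<notin> F\<close> col \<alpha>(1) \<beta>(1) \<alpha>(2) \<beta>(2)])
qed

theorem konig_edge_colouring:
  assumes "finite V"
  shows "graph_edges_ok V E \<Longrightarrow> bipartite_by side E \<Longrightarrow> max_degree_le V E k \<Longrightarrow>
    \<exists>col. (\<forall>e\<in>E. col e < k) \<and> proper_edge_colouring col E"
proof (induction "card E" arbitrary: E rule: less_induct)
  case less
  show ?case
  proof (cases "E = {}")
    case True
    then show ?thesis unfolding proper_edge_colouring_def by auto
  next
    case False
    then obtain e where "e \<in> E" by blast
    then obtain a b where "e = {a, b}" using less.prems(2) unfolding bipartite_by_def by blast
    then have ab: "{a, b} \<in> E" using \<open>e \<in> E\<close> by simp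
    define F where "F = E - {{a, b}}"
    have F: "F \<subseteq> E" "E = insert {a, b} F" "{a, b} \<notin> F" using ab unfolding F_def by auto
    have "card F < card E"
      unfolding F_def using graph_edges_ok_finite[OF assms less.prems(1)] ab by (rule card_Diff1_less)
    moreover have "graph_edges_ok V F" using graph_edges_ok_subset[OF less.prems(1) F(1)] .
    moreover have "bipartite_by side F" using bipartite_by_subset[OF less.prems(2) F(1)] .
    moreover have "max_degree_le V F k"
      using less.prems(3) degree_mono[OF assms order.refl F(1)] order_trans
      unfolding max_degree_le_def by blast
    ultimately obtain col where "\<forall>e\<in>F. col e < k" "proper_edge_colouring col F"
      using less.hyps by blast
    then have "\<exists>col'. (\<forall>e\<in>insert {a, b} F. col' e < k) \<and> proper_edge_colouring col' (insert {a, b} F)"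
      using proper_edge_colouring_extend[OF assms less.prems[unfolded F(2)] F(3)] by blast
    then show ?thesis unfolding F(2) .
  qed
qed

section \<open>Decomposition into graphs of maximum degree two\<close>

definition split_edges :: "('a \<times> 'a) set \<Rightarrow> ('a \<times> bool) set set" where
  "split_edges R = (\<lambda>(a, b). {(a, True), (b, False)}) ` R"

lemma split_edges_iff: "{(a, True), (b, False)} \<in> split_edges R \<longleftrightarrow> (a, b) \<in> R"
proof
  assume "{(a, True), (b, False)} \<in> split_edges R"
  then obtain a' b' where "(a', b') \<in> R" "{(a, True), (b, False)} = {(a', True), (b', False)}"
    unfolding split_edges_def by auto
  then show "(a, b) \<in> R" by (simp add: doubleton_eq_iff)
qed (auto simp: split_edges_def)

lemma split_edges_cases: "e \<in> split_edges R \<Longrightarrow> \<exists>a b. e = {(a, True), (b, False)} \<and> (a, b) \<in> R"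
  unfolding split_edges_def by auto

lemma graph_edges_ok_split_edges:
  assumes "orientation V E R" shows "graph_edges_ok (V \<times> UNIV) (split_edges R)"
  unfolding graph_edges_ok_def
proof
  fix e assume "e \<in> split_edges R"
  then obtain a b where "e = {(a, True), (b, False)}" "(a, b) \<in> R" using split_edges_cases by blast
  then show "\<exists>u v. e = {u, v} \<and> u \<in> V \<times> UNIV \<and> v \<in> V \<times> UNIV \<and> u \<noteq> v"
    using orientation_subset[OF assms] by blast
qed

lemma bipartite_by_split_edges: "bipartite_by snd (split_edges R)"
  unfolding bipartite_by_def
proof
  fix e assume "e \<in> split_edges R"
  then obtain a b where "e = {(a, True), (b, False)}" using split_edges_cases by blast
  then show "\<exists>x y. e = {x, y} \<and> snd x \<noteq> snd y" by auto
qed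

lemma degree_split_edges:
  assumes "finite V" "orientation V E R"
  shows "degree (V \<times> UNIV) (split_edges R) (z, s) \<le> (if s then out_degree R z else in_degree R z)"
proof -
  define N where "N = (if s then {c. (z, c) \<in> R} else {c. (c, z) \<in> R})"
  have "{u \<in> V \<times> UNIV. {u, (z, s)} \<in> split_edges R} \<subseteq> (\<lambda>c. (c, \<not> s)) ` N"
  proof
    fix u assume "u \<in> {u \<in> V \<times> UNIV. {u, (z, s)} \<in> split_edges R}"
    then have "{u, (z, s)} \<in> split_edges R" by simp
    then obtain a b where ab: "{u, (z, s)} = {(a, True), (b, False)}" "(a, b) \<in> R"
      using split_edges_cases by blast
    show "u \<in> (\<lambda>c. (c, \<not> s)) ` N"
    proof (cases s)
      case True
      then have "u = (b, False)" "a = z" using ab(1) by (auto simp: doubleton_eq_iff)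
      then show ?thesis using True ab(2) unfolding N_def by simp
    next
      case False
      then have "u = (a, True)" "b = z" using ab(1) by (auto simp: doubleton_eq_iff)
      then show ?thesis using False ab(2) unfolding N_def by simp
    qed
  qed
  moreover have "finite N"
    unfolding N_def using orientation_finite_out[OF assms] orientation_finite_in[OF assms] by simp
  ultimately have "degree (V \<times> UNIV) (split_edges R) (z, s) \<le> card ((\<lambda>c. (c, \<not> s)) ` N)"
    unfolding degree_def by (intro card_mono) auto
  also have "\<dots> \<le> card N" using \<open>finite N\<close> by (rule card_image_le)
  finally show ?thesis unfolding N_def out_degree_def in_degree_def by (cases s) auto
qed

lemma card_colour_class_at_vertex:
  assumes "proper_edge_colouring col F" "finite F"
  shows "card {e \<in> F. x \<in> e \<and> col e = i} \<le> 1"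
proof -
  have "\<forall>e\<in>{e \<in> F. x \<in> e \<and> col e = i}. \<forall>e'\<in>{e \<in> F. x \<in> e \<and> col e = i}. e = e'"
    using assms(1) unfolding proper_edge_colouring_def by blast
  then show ?thesis using card_le_Suc0_iff_eq[of "{e \<in> F. x \<in> e \<and> col e = i}"] assms(2) by simp
qed

text \<open>A colour class of the split graph is a matching; pulled back to \<open>V\<close>, every vertex keeps at
  most one out-arc and one in-arc of that colour.\<close>

lemma colour_class_max_degree_2:
  assumes "finite V" "orientation V E R" "proper_edge_colouring col (split_edges R)"
  shows "max_degree_le V {{a, b} | a b. (a, b) \<in> R \<and> col {(a, True), (b, False)} = i} 2"
  unfolding max_degree_le_def degree_def
proof
  fix z assume "z \<in> V"
  have "finite (split_edges R)" unfolding split_edges_def using orientation_finite[OF assms(1,2)]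
    by simp
  have arcs_le_1: "card {c. P c \<and> col (f c) = i} \<le> 1"
    if "inj f" "\<forall>c. P c \<longrightarrow> f c \<in> split_edges R \<and> x \<in> f c" for P f and x :: "'a \<times> bool"
  proof -
    have "card {c. P c \<and> col (f c) = i} \<le> card {e \<in> split_edges R. x \<in> e \<and> col e = i}"
      using that \<open>finite (split_edges R)\<close>
      by (intro card_inj_on_le[of f]) (auto simp: inj_on_def inj_def)
    then show ?thesis
      using card_colour_class_at_vertex[OF assms(3) \<open>finite (split_edges R)\<close>, of x i]
      by linarith
  qed
  let ?Out = "{c. (z, c) \<in> R \<and> col {(z, True), (c, False)} = i}"
    and ?In = "{c. (c, z) \<in> R \<and> col {(c, True), (z, False)} = i}"
  have "{u \<in> V. {u, z} \<in> {{a, b} | a b. (a, b) \<in> R \<and> col {(a, True), (b, False)} = i}} \<subseteq> ?Out \<union> ?In"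
    by (auto simp: doubleton_eq_iff)
  moreover have "finite ?Out" "finite ?In"
    using orientation_finite_out[OF assms(1,2)] orientation_finite_in[OF assms(1,2)]
    by (auto intro: finite_subset)
  moreover have "card ?Out \<le> 1"
    by (rule arcs_le_1[of _ _ "(z, True)"]) (auto simp: inj_def doubleton_eq_iff split_edges_iff)
  moreover have "card ?In \<le> 1"
    by (rule arcs_le_1[of _ _ "(z, False)"]) (auto simp: inj_def doubleton_eq_iff split_edges_iff)
  ultimately have "card {u \<in> V. {u, z} \<in> {{a, b} | a b. (a, b) \<in> R \<and> col {(a, True), (b, False)} = i}}
      \<le> card (?Out \<union> ?In)"
    by (intro card_mono) auto
  also have "\<dots> \<le> card ?Out + card ?In" by (rule card_Un_le)
  finally show "card {u \<in> V. {u, z} \<in> {{a, b} | a b. (a, b) \<in> R \<and> col {(a, True), (b, False)} = i}} \<le> 2"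
    using \<open>card ?Out \<le> 1\<close> \<open>card ?In \<le> 1\<close> by linarith
qed

theorem max_degree_decomposition:
  assumes "finite V" "graph_edges_ok V E" "max_degree_le V E (2 * k)"
  shows "\<exists>Es. (\<forall>i<k. Es i \<subseteq> E \<and> max_degree_le V (Es i) 2) \<and> E = (\<Union>i<k. Es i)"
proof -
  obtain R where R: "orientation V E R" "\<forall>z\<in>V. out_degree R z \<le> k \<and> in_degree R z \<le> k"
    using balanced_orientation_degrees[OF assms] by blast
  have max_deg: "max_degree_le (V \<times> UNIV) (split_edges R) k"
    unfolding max_degree_le_def
  proof
    fix v assume "v \<in> V \<times> (UNIV :: bool set)"
    then obtain z s where "v = (z, s)" "z \<in> V" by blast
    then show "degree (V \<times> UNIV) (split_edges R) v \<le> k"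
      using degree_split_edges[OF assms(1) R(1), of z s] R(2) by (cases s) (auto split: if_splits)
  qed
  have "finite (V \<times> (UNIV :: bool set))" using assms(1) by simp
  from konig_edge_colouring[OF this graph_edges_ok_split_edges[OF R(1)] bipartite_by_split_edges max_deg]
  obtain col where col: "\<forall>e\<in>split_edges R. col e < k" "proper_edge_colouring col (split_edges R)"
    by blast
  define Es where "Es i = {{a, b} | a b. (a, b) \<in> R \<and> col {(a, True), (b, False)} = i}" for i
  have sub: "Es i \<subseteq> E" for i unfolding Es_def by (auto dest: orientation_edge[OF R(1)])
  moreover have "E \<subseteq> (\<Union>i<k. Es i)"
  proof
    fix e assume "e \<in> E"
    then obtain a b where ab: "e = {a, b}" "(a, b) \<in> R" using orientation_cover[OF R(1)] by blast
    then have "col {(a, True), (b, False)} < k" using col(1) split_edges_iff[of a b R] by simp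
    moreover have "e \<in> Es (col {(a, True), (b, False)})" unfolding Es_def using ab by blast
    ultimately show "e \<in> (\<Union>i<k. Es i)" by blast
  qed
  ultimately have "E = (\<Union>i<k. Es i)" by blast
  moreover have "max_degree_le V (Es i) 2" for i
    unfolding Es_def by (rule colour_class_max_degree_2[OF assms(1) R(1) col(2)])
  ultimately show ?thesis using sub by blast
qed

theorem k_OR_PCG_if_max_degree_le:
  assumes "finite V" "V \<noteq> {}" "graph_edges_ok V E" "max_degree_le V E (2 * k)"
  shows "k_OR_PCG k V E"
proof -
  obtain Es where Es: "\<forall>i<k. Es i \<subseteq> E \<and> max_degree_le V (Es i) 2" "E = (\<Union>i<k. Es i)"
    using max_degree_decomposition[OF assms(1,3,4)] by blast
  have "PCG V (Es i)" if "i < k" for i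
  proof (rule caterpillar_rep_imp_PCG)
    show "graph_edges_ok V (Es i)" using graph_edges_ok_subset[OF assms(3)] Es(1) \<open>i < k\<close> by blast
    show "caterpillar_rep V (Es i)" using max_degree_2_caterpillar_rep[OF assms(1)] Es(1) \<open>i < k\<close>
      by blast
  qed (use assms in auto)
  then show ?thesis unfolding k_OR_PCG_def using Es(2) by blast
qed

theorem theorem5:
  shows "(\<forall>(V :: 'a set) E. simple_graph V E \<and> connected_graph V E \<and>
            (\<forall>v\<in>V. degree V E v \<le> 3) \<longrightarrow> k_OR_PCG 2 V E)
       \<and> (\<forall>(V :: 'a set) E \<Delta>. simple_graph V E \<and> regular_graph V E \<Delta> \<and> even \<Delta> \<longrightarrow>
            k_OR_PCG (\<Delta> div 2) V E)
       \<and> (\<forall>(V :: 'a set) E \<Delta>. simple_graph V E \<and> bipartite_graph V E \<and> regular_graph V E \<Delta> \<and> odd \<Delta> \<longrightarrow>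
            k_OR_PCG (nat \<lceil>real \<Delta> / 2\<rceil>) V E)"
proof (intro conjI allI impI)
  fix V :: "'a set" and E
  assume G: "simple_graph V E \<and> connected_graph V E \<and> (\<forall>v\<in>V. degree V E v \<le> 3)"
  then have "max_degree_le V E (2 * 2)" unfolding max_degree_le_def by fastforce
  with G show "k_OR_PCG 2 V E" using k_OR_PCG_if_max_degree_le unfolding simple_graph_def by blast
next
  fix V :: "'a set" and E \<Delta>
  assume G: "simple_graph V E \<and> regular_graph V E \<Delta> \<and> even \<Delta>"
  then have "max_degree_le V E (2 * (\<Delta> div 2))" unfolding max_degree_le_def regular_graph_def by auto
  with G show "k_OR_PCG (\<Delta> div 2) V E" using k_OR_PCG_if_max_degree_le unfolding simple_graph_def
    by blast
next
  fix V :: "'a set" and E \<Delta>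
  assume G: "simple_graph V E \<and> bipartite_graph V E \<and> regular_graph V E \<Delta> \<and> odd \<Delta>"
  have "\<Delta> \<le> 2 * nat \<lceil>real \<Delta> / 2\<rceil>" using le_of_int_ceiling[of "real \<Delta> / 2"] by linarith
  with G have "max_degree_le V E (2 * nat \<lceil>real \<Delta> / 2\<rceil>)"
    unfolding max_degree_le_def regular_graph_def by auto
  with G show "k_OR_PCG (nat \<lceil>real \<Delta> / 2\<rceil>) V E"
    using k_OR_PCG_if_max_degree_le unfolding simple_graph_def by blast
qed

end
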